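(* Let $m=k^r$ with $k\ge 5$ and $r\ge 2$, let $T=A_m$, $G\in\{A_m,S_m\}$, and suppose $H=(S_k\wr S_r)\cap G$ is a maximal subgroup of $G$, where $S_k\wr S_r$ is embedded in $S_m$ via its product action on $\Gamma^r$, $\Gamma=\{1,\dots,k\}$. Consider $G$ acting on the cosets of $H$, of degree $n$. Then $\mathrm{ifix}(T)>n^{4/9}$.
   Context: The product action: $(\gamma_1,\dots,\gamma_r)^{(x_1,\dots,x_r)\sigma}=(\gamma_1^{x_1},\dots,\gamma_r^{x_r})^\sigma$, where $\sigma\in S_r$ permutes coordinates. $\mathrm{ifix}(T)=\max\{\mathrm{fix}(t): t\in T \text{ an involution}\}$, where $\mathrm{fix}(t)$ is the number of fixed points of $t$ on the coset space. *)

theory Defs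
  imports Complex_Main "HOL-Algebra.Coset" "HOL-Combinatorics.Permutations"
begin

definition Sym_grp :: "'a set \<Rightarrow> ('a \<Rightarrow> 'a) monoid" where
  "Sym_grp S = \<lparr>carrier = {p. p permutes S}, monoid.mult = (\<circ>), one = id\<rparr>"

definition Alt_grp :: "'a set \<Rightarrow> ('a \<Rightarrow> 'a) monoid" where
  "Alt_grp S = \<lparr>carrier = {p. p permutes S \<and> evenperm p}, monoid.mult = (\<circ>), one = id\<rparr>"

text \<open>Gamma^r with Gamma = {0..<k} (a k-element set), coordinates indexed by {0..<r}.\<close>

definition prod_dom :: "nat \<Rightarrow> nat \<Rightarrow> (nat \<Rightarrow> nat) set" where
  "prod_dom k r = PiE {0..<r} (\<lambda>_. {0..<k})"

text \<open>Image of S_k wr S_r in Sym(Gamma^r) under the product action: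
  gamma^((x_1,..,x_r) sigma) = (gamma_1^x_1, ..., gamma_r^x_r)^sigma, where sigma moves
  coordinate i to position sigma(i), i.e. the new j-th coordinate is x_(inv sigma j) applied
  to gamma_(inv sigma j).\<close>

definition wreath_prod_action :: "nat \<Rightarrow> nat \<Rightarrow> ((nat \<Rightarrow> nat) \<Rightarrow> (nat \<Rightarrow> nat)) set" where
  "wreath_prod_action k r =
     {p. \<exists>\<sigma> x. \<sigma> permutes {0..<r} \<and> (\<forall>i<r. x i permutes {0..<k}) \<and>
          p = (\<lambda>\<gamma>. if \<gamma> \<in> prod_dom k r
                     then restrict (\<lambda>j. x (Hilbert_Choice.inv \<sigma> j) (\<gamma> (Hilbert_Choice.inv \<sigma> j))) {0..<r}
                     else \<gamma>)}"

definition maximal_subgroup :: "'a set \<Rightarrow> ('a, 'b) monoid_scheme \<Rightarrow> bool" where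
  "maximal_subgroup H G \<longleftrightarrow> subgroup H G \<and> H \<noteq> carrier G \<and>
     (\<forall>K. subgroup K G \<and> H \<subseteq> K \<longrightarrow> K = H \<or> K = carrier G)"

definition coset_fix :: "('a, 'b) monoid_scheme \<Rightarrow> 'a set \<Rightarrow> 'a \<Rightarrow> nat" where
  "coset_fix G H g = card {C \<in> rcosets\<^bsub>G\<^esub> H. C #>\<^bsub>G\<^esub> g = C}"

definition ifix :: "('a, 'b) monoid_scheme \<Rightarrow> 'a set \<Rightarrow> 'a set \<Rightarrow> nat" where
  "ifix G H T = Max {coset_fix G H t | t. t \<in> T \<and> t \<noteq> \<one>\<^bsub>G\<^esub> \<and> t \<otimes>\<^bsub>G\<^esub> t = \<one>\<^bsub>G\<^esub>}"

end

theory Submission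
  imports Defs
begin

text \<open>Let \<open>t = (\<tau>, \<tau>, 1, \<dots>, 1)\<close> with \<open>\<tau> = (0 1)\<close>, an involution in \<open>H \<inter> A_m\<close>. The
  number of cosets of \<open>H\<close> fixed by \<open>t\<close> is \<open>|t^G \<inter> H| |C_G(t)| / |H|\<close>. On \<open>\<Gamma>^r\<close>, \<open>t\<close> has
  \<open>j = 2(k-1)k^(r-2)\<close> two-cycles and \<open>f = (k-2)^2 k^(r-2)\<close> fixed points, so its centraliser in
  \<open>A_m\<close> has order at least \<open>2^(j-1) j! f!\<close>; and \<open>H\<close> contains the \<open>4(k-2)^2\<close> conjugates
  \<open>(\<tau>\<^sub>1, \<tau>\<^sub>2, 1, \<dots>, 1)\<close> of \<open>t\<close>, the \<open>\<tau>\<^sub>i\<close> being transpositions joining \<open>{0, 1}\<close> to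
  \<open>{2, \<dots>, k-1}\<close>. As \<open>n |H| = |G| \<le> m!\<close> and \<open>|H| \<le> k!^r r!\<close>, the bound \<open>fix(t)^9 > n^4\<close>
  reduces to \<open>m!^4 (k!^r r!)^5 < (4(k-2)^2 2^(j-1) j! f!)^9\<close>, which follows from
  \<open>x log x - x \<le> log x! \<le> x log x\<close>, except for \<open>r = 2, k \<le> 7\<close>, where it is checked numerically.\<close>

section \<open>Fixed points on cosets\<close>

lemma (in group) rcoset_fixed_iff:
  assumes H: "subgroup H G" and x: "x \<in> carrier G" and t: "t \<in> carrier G"
  shows "(H #> x) #> t = H #> x \<longleftrightarrow> x \<otimes> t \<otimes> inv x \<in> H"
proof -
  interpret subgroup H G by fact
  have "(H #> x) #> t = H #> (x \<otimes> t)" using coset_mult_assoc[OF subset x t] .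
  also have "\<dots> = H #> x \<longleftrightarrow> x \<otimes> t \<in> H #> x"
  proof
    assume "H #> (x \<otimes> t) = H #> x"
    moreover have "x \<otimes> t \<in> H #> (x \<otimes> t)" using rcos_self[OF _ H] x t by auto
    ultimately show "x \<otimes> t \<in> H #> x" by simp
  next
    assume "x \<otimes> t \<in> H #> x"
    then show "H #> (x \<otimes> t) = H #> x" using repr_independence[OF _ x H] by simp
  qed
  also have "\<dots> \<longleftrightarrow> x \<otimes> t \<otimes> inv x \<in> H" using rcos_module[OF is_group x] x t by auto
  finally show ?thesis .
qed

lemma (in group) card_conjugating_into_subgroup:
  assumes fin: "finite (carrier G)" and H: "subgroup H G" and t: "t \<in> carrier G"
  shows "card {x \<in> carrier G. x \<otimes> t \<otimes> inv x \<in> H} = card H * coset_fix G H t"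
proof -
  interpret subgroup H G by fact
  define Fx where "Fx = {C \<in> rcosets H. C #> t = C}"
  have union: "{x \<in> carrier G. x \<otimes> t \<otimes> inv x \<in> H} = \<Union> Fx"
  proof
    show "{x \<in> carrier G. x \<otimes> t \<otimes> inv x \<in> H} \<subseteq> \<Union> Fx"
    proof
      fix x assume "x \<in> {x \<in> carrier G. x \<otimes> t \<otimes> inv x \<in> H}"
      then have x: "x \<in> carrier G" and xt: "x \<otimes> t \<otimes> inv x \<in> H" by auto
      have "H #> x \<in> Fx" using rcoset_fixed_iff[OF H x t] xt x by (auto simp: Fx_def RCOSETS_def)
      moreover have "x \<in> H #> x" using rcos_self[OF x H] .
      ultimately show "x \<in> \<Union> Fx" by blast
    qed
  next
    show "\<Union> Fx \<subseteq> {x \<in> carrier G. x \<otimes> t \<otimes> inv x \<in> H}"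
    proof
      fix y assume "y \<in> \<Union> Fx"
      then obtain x where x: "x \<in> carrier G" and fx: "(H #> x) #> t = H #> x" and y: "y \<in> H #> x"
        by (auto simp: Fx_def RCOSETS_def)
      have y': "y \<in> carrier G" using y x r_coset_subset_G subset by blast
      have "H #> y = H #> x" using repr_independence[OF y x H] by simp
      then have "(H #> y) #> t = H #> y" using fx by simp
      then show "y \<in> {x \<in> carrier G. x \<otimes> t \<otimes> inv x \<in> H}"
        using rcoset_fixed_iff[OF H y' t] y' by auto
    qed
  qed
  have "card H * card Fx = card (\<Union> Fx)"
  proof (rule card_partition)
    have "Fx \<subseteq> Pow (carrier G)" using rcosets_subset_PowG[OF H] by (auto simp: Fx_def)
    then show "finite Fx" using fin finite_subset by blast
    show "finite (\<Union> Fx)" unfolding union[symmetric] using fin by simp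
    show "card c = card H" if "c \<in> Fx" for c
      using that card_rcosets_equal[OF _ subset] by (auto simp: Fx_def)
    show "c1 \<inter> c2 = {}" if "c1 \<in> Fx" "c2 \<in> Fx" "c1 \<noteq> c2" for c1 c2
      using that rcos_disjoint[OF H] by (auto simp: Fx_def pairwise_def disjnt_def)
  qed
  then show ?thesis using union by (simp add: coset_fix_def Fx_def)
qed

lemma (in group) card_centralizer_times_conjugates_le:
  assumes fin: "finite (carrier G)" and t: "t \<in> carrier G" and finS: "finite S"
    and conj: "\<And>s. s \<in> S \<Longrightarrow> \<exists>x\<in>carrier G. x \<otimes> t \<otimes> inv x = s"
  shows "card {x \<in> carrier G. x \<otimes> t = t \<otimes> x} * card S \<le> card {x \<in> carrier G. x \<otimes> t \<otimes> inv x \<in> S}"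
proof -
  define Cen where "Cen = {x \<in> carrier G. x \<otimes> t = t \<otimes> x}"
  obtain xs where xs: "\<And>s. s \<in> S \<Longrightarrow> xs s \<in> carrier G \<and> xs s \<otimes> t \<otimes> inv (xs s) = s"
    using conj by metis
  define Y where "Y s = (\<otimes>) (xs s) ` Cen" for s
  have Y: "y \<in> carrier G \<and> y \<otimes> t \<otimes> inv y = s" if s: "s \<in> S" and "y \<in> Y s" for s y
  proof -
    obtain c where c: "c \<in> carrier G" "c \<otimes> t = t \<otimes> c" and y: "y = xs s \<otimes> c"
      using \<open>y \<in> Y s\<close> by (auto simp: Y_def Cen_def)
    have xc: "xs s \<in> carrier G" using xs[OF s] by simp
    have "y \<otimes> t \<otimes> inv y = xs s \<otimes> (c \<otimes> t) \<otimes> inv c \<otimes> inv (xs s)"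
      using xc c(1) t by (simp add: y inv_mult_group m_assoc)
    also have "\<dots> = xs s \<otimes> t \<otimes> inv (xs s)"
    proof -
      have "c \<otimes> (inv c \<otimes> z) = z" if "z \<in> carrier G" for z
        using that c(1) by (simp add: m_assoc[symmetric])
      then show ?thesis using xc c t by (simp add: m_assoc)
    qed
    finally show ?thesis using xs[OF s] xc c y by simp
  qed
  have finCen: "finite Cen" using fin by (simp add: Cen_def)
  have "card Cen * card S = (\<Sum>s\<in>S. card (Y s))"
  proof -
    have "card (Y s) = card Cen" if "s \<in> S" for s
      unfolding Y_def using xs[OF that] by (intro card_image) (auto simp: inj_on_def Cen_def)
    then show ?thesis by simp
  qed
  also have "\<dots> = card (\<Union>(Y ` S))"
  proof (rule card_UN_disjoint[symmetric])
    show "finite S" by fact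
    show "\<forall>s\<in>S. finite (Y s)" using finCen by (simp add: Y_def)
    show "\<forall>s\<in>S. \<forall>s'\<in>S. s \<noteq> s' \<longrightarrow> Y s \<inter> Y s' = {}" using Y by blast
  qed
  also have "\<dots> \<le> card {x \<in> carrier G. x \<otimes> t \<otimes> inv x \<in> S}"
    using Y fin by (intro card_mono) auto
  finally show ?thesis by (simp add: Cen_def)
qed

lemma (in group) coset_fix_lower_bound:
  assumes fin: "finite (carrier G)" and H: "subgroup H G" and t: "t \<in> carrier G" and "S \<subseteq> H"
    and conj: "\<And>s. s \<in> S \<Longrightarrow> \<exists>x\<in>carrier G. x \<otimes> t \<otimes> inv x = s"
  shows "card {x \<in> carrier G. x \<otimes> t = t \<otimes> x} * card S \<le> coset_fix G H t * card H"
proof -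
  have "finite S" using finite_subset[OF subgroup.subset[OF H] fin] finite_subset[OF \<open>S \<subseteq> H\<close>] by simp
  then have "card {x \<in> carrier G. x \<otimes> t = t \<otimes> x} * card S \<le> card {x \<in> carrier G. x \<otimes> t \<otimes> inv x \<in> S}"
    by (rule card_centralizer_times_conjugates_le[OF fin t _ conj])
  also have "\<dots> \<le> card {x \<in> carrier G. x \<otimes> t \<otimes> inv x \<in> H}"
    using \<open>S \<subseteq> H\<close> fin by (intro card_mono) auto
  also have "\<dots> = card H * coset_fix G H t" by (rule card_conjugating_into_subgroup[OF fin H t])
  finally show ?thesis by (simp add: mult.commute)
qed

lemma coset_fix_le_ifix:
  assumes "finite (carrier G)" and "t \<in> T" "t \<noteq> \<one>\<^bsub>G\<^esub>" "t \<otimes>\<^bsub>G\<^esub> t = \<one>\<^bsub>G\<^esub>"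
  shows "coset_fix G H t \<le> ifix G H T"
proof -
  let ?V = "{coset_fix G H t | t. t \<in> T \<and> t \<noteq> \<one>\<^bsub>G\<^esub> \<and> t \<otimes>\<^bsub>G\<^esub> t = \<one>\<^bsub>G\<^esub>}"
  have "finite (rcosets\<^bsub>G\<^esub> H)" using assms(1) by (simp add: RCOSETS_def)
  then have "?V \<subseteq> {0..card (rcosets\<^bsub>G\<^esub> H)}" by (auto simp: coset_fix_def intro!: card_mono)
  then have "finite ?V" using finite_subset by blast
  moreover have "coset_fix G H t \<in> ?V" using assms by auto
  ultimately show ?thesis unfolding ifix_def by (rule Max_ge)
qed

lemma powr_less_of_pow_less:
  fixes n x a b :: nat
  assumes less: "n ^ a < x ^ b" and "a > 0" "b > 0"
  shows "real n powr (real a / real b) < real x"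
proof (cases "n = 0")
  case True
  have "x > 0" using less True \<open>a > 0\<close> \<open>b > 0\<close> by (cases x) (simp_all add: power_0_left)
  then show ?thesis using True by simp
next
  case False
  have "real n powr (real a / real b) = (real n ^ a) powr (1 / real b)"
    using False by (simp add: powr_realpow[symmetric] powr_powr)
  also have "\<dots> < (real x ^ b) powr (1 / real b)"
    using less \<open>b > 0\<close> by (intro powr_less_mono2) (auto simp flip: of_nat_power)
  also have "\<dots> = real x"
    using less \<open>b > 0\<close> by (cases x) (auto simp: powr_realpow[symmetric] powr_powr)
  finally show ?thesis .
qed

section \<open>Involutions and their centralisers\<close>

lemma involution_permutes:
  assumes "\<And>x. f (f x) = x" "\<And>x. x \<notin> S \<Longrightarrow> f x = x"
  shows "f permutes S"
  unfolding permutes_def using assms by metis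

lemma involution_transversal_exists:
  assumes "finite N" "\<And>x. t (t x) = x" "\<And>x. x \<in> N \<Longrightarrow> t x \<in> N" "\<And>x. x \<in> N \<Longrightarrow> t x \<noteq> x"
  shows "\<exists>A. A \<subseteq> N \<and> A \<inter> t ` A = {} \<and> A \<union> t ` A = N"
  using assms
proof (induction "card N" arbitrary: N rule: less_induct)
  case less
  show ?case
  proof (cases "N = {}")
    case True then show ?thesis by auto
  next
    case False
    then obtain a where a: "a \<in> N" by blast
    define N' where "N' = N - {a, t a}"
    have ta: "t a \<in> N" "t a \<noteq> a" using less a by auto
    have "card N' < card N" unfolding N'_def using a less(2) by (intro psubset_card_mono) auto
    moreover have "t x \<in> N'" if x: "x \<in> N'" for x
    proof -
      have "x \<in> N" "x \<noteq> a" "x \<noteq> t a" using x unfolding N'_def by auto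
      moreover have "t x \<noteq> a" using \<open>x \<noteq> t a\<close> less(3)[of x] by auto
      moreover have "t x \<noteq> t a" using \<open>x \<noteq> a\<close> less(3)[of x] less(3)[of a] by metis
      ultimately show ?thesis unfolding N'_def using less(4) by auto
    qed
    ultimately obtain A where A: "A \<subseteq> N'" "A \<inter> t ` A = {}" "A \<union> t ` A = N'"
      using less(1)[of N'] less(2-5) unfolding N'_def by auto
    have "a \<notin> t ` A"
    proof
      assume "a \<in> t ` A"
      then have "t a \<in> A" using less(3) by auto
      then show False using A(1) unfolding N'_def by auto
    qed
    then have "insert a A \<inter> t ` insert a A = {}" using A ta unfolding N'_def by auto
    moreover have "insert a A \<union> t ` insert a A = N" using A a ta unfolding N'_def by auto
    ultimately show ?thesis using A(1) a unfolding N'_def by (intro exI[of _ "insert a A"]) auto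
  qed
qed

lemma evenperm_involution:
  assumes "finite A" "\<And>x. t (t x) = x" "A \<inter> t ` A = {}" "{x. t x \<noteq> x} = A \<union> t ` A"
  shows "permutation t \<and> (evenperm t \<longleftrightarrow> even (card A))"
  using assms
proof (induction A arbitrary: t rule: finite_induct)
  case empty
  then have "t = id" by auto
  then show ?case by simp
next
  case (insert a A)
  define t' where "t' x = (if x = a \<or> x = t a then x else t x)" for x
  have ta: "t a \<noteq> a" using insert.prems(3) by auto
  have t'_t': "t' (t' x) = x" for x
  proof (cases "x = a \<or> x = t a")
    case True then show ?thesis unfolding t'_def by auto
  next
    case False
    then have "t x \<noteq> a" "t x \<noteq> t a" using insert.prems(1) by metis+
    then show ?thesis using False insert.prems(1) unfolding t'_def by auto
  qed
  have tA: "t a \<notin> A" "a \<notin> t ` A" using insert.prems(2) by blast+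
  have image: "t' ` A = t ` A" unfolding t'_def using insert.hyps(2) tA by (auto simp: image_def)
  have "{x. t' x \<noteq> x} = A \<union> t' ` A"
  proof -
    have "{x. t' x \<noteq> x} = {x. t x \<noteq> x} - {a, t a}" unfolding t'_def by auto
    moreover have "t a \<notin> t ` A" using insert.hyps(2) insert.prems(1) by (metis image_iff)
    ultimately show ?thesis using image tA insert.hyps(2) insert.prems(3) by auto
  qed
  moreover have "A \<inter> t' ` A = {}" using image insert.prems(2) by auto
  ultimately have IH: "permutation t'" "evenperm t' \<longleftrightarrow> even (card A)"
    using insert.IH[OF t'_t'] by auto
  have t: "t = Transposition.transpose a (t a) \<circ> t'"
    unfolding t'_def using insert.prems(1) ta by (auto simp: fun_eq_iff Transposition.transpose_def) metis
  show ?case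
    using IH ta insert.hyps evenperm_comp[OF permutation_swap_id IH(1), of a "t a"] evenperm_swap[of a "t a"]
    by (subst (1 2) t) (simp add: permutation_compose permutation_swap_id)
qed

lemma card_le_twice_card_evenperm:
  assumes fin: "finite C" and u: "u \<in> C" "permutation u" "\<not> evenperm u"
    and closed: "\<And>c. c \<in> C \<Longrightarrow> u \<circ> c \<in> C" and perm: "\<And>c. c \<in> C \<Longrightarrow> permutation c"
  shows "card C \<le> 2 * card {c\<in>C. evenperm c}"
proof -
  let ?E = "{c\<in>C. evenperm c}" and ?O = "{c\<in>C. \<not> evenperm c}"
  have "card C = card ?E + card ?O"
    using fin by (subst card_Un_disjoint[symmetric]) (auto intro: arg_cong[where f=card])
  moreover have "card ?O \<le> card ?E"
  proof (rule card_inj_on_le)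
    show "inj_on ((\<circ>) u) ?O"
    proof (rule inj_onI)
      fix x y assume "u \<circ> x = u \<circ> y"
      then show "x = y" using bij_is_inj[OF permutation_bijective[OF u(2)]] by (auto simp: fun_eq_iff inj_eq)
    qed
    show "(\<circ>) u ` ?O \<subseteq> ?E" using closed u by (auto simp: evenperm_comp[OF u(2) perm])
  qed (use fin in auto)
  ultimately show ?thesis by simp
qed

definition swap_pairs :: "('a \<Rightarrow> 'a) \<Rightarrow> 'a set \<Rightarrow> 'a \<Rightarrow> 'a" where
  "swap_pairs t E x = (if x \<in> E \<union> t ` E then t x else x)"

text \<open>Writing the support of the involution \<open>t\<close> as \<open>A \<union> t ` A\<close>, a permutation \<open>\<pi>\<close> of
  \<open>A\<close> acts on the 2-cycles of \<open>t\<close> through \<open>\<pi> \<circ> t \<circ> \<pi> \<circ> t\<close>, the 2-cycles meeting \<open>E\<close>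
  are flipped and \<open>\<rho>\<close> permutes the fixed points: this embeds \<open>C\<^sub>2 \<wr> S\<^sub>a \<times> S\<^sub>f\<close> into the
  centraliser of \<open>t\<close>.\<close>

definition centralizing_perm :: "('a \<Rightarrow> 'a) \<Rightarrow> 'a set \<Rightarrow> ('a \<Rightarrow> 'a) \<Rightarrow> ('a \<Rightarrow> 'a) \<Rightarrow> 'a \<Rightarrow> 'a" where
  "centralizing_perm t E \<pi> \<rho> = swap_pairs t E \<circ> \<pi> \<circ> t \<circ> \<pi> \<circ> t \<circ> \<rho>"

locale involution_transversal =
  fixes \<Omega> :: "'a set" and t :: "'a \<Rightarrow> 'a" and A :: "'a set"
  assumes finite_\<Omega>: "finite \<Omega>" and t_permutes: "t permutes \<Omega>" and t_t [simp]: "\<And>x. t (t x) = x"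
    and A_disjoint: "A \<inter> t ` A = {}" and A_cover: "A \<union> t ` A = {x\<in>\<Omega>. t x \<noteq> x}"
begin

lemma A_subset: "A \<subseteq> \<Omega>" and image_A_subset: "t ` A \<subseteq> \<Omega>"
  using A_cover by auto

lemma finite_A: "finite A"
  using A_subset finite_\<Omega> finite_subset by blast

lemma t_notin_A: "x \<in> A \<Longrightarrow> t x \<notin> A"
  using A_disjoint by auto

lemma moved_A: "x \<in> A \<Longrightarrow> t x \<noteq> x" and moved_image_A: "x \<in> t ` A \<Longrightarrow> t x \<noteq> x"
  using A_cover by auto

lemma \<Omega>_cases: "x \<in> \<Omega> \<Longrightarrow> x \<in> A \<or> x \<in> t ` A \<or> t x = x"
  using A_cover by auto

lemma card_moved: "card {x\<in>\<Omega>. t x \<noteq> x} = 2 * card A"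
proof -
  have "inj_on t A" by (metis inj_on_inverseI t_t)
  then show ?thesis
    using A_cover[symmetric] A_disjoint finite_A by (simp add: card_Un_disjoint card_image)
qed

lemma evenperm_t_iff: "evenperm t \<longleftrightarrow> even (card A)"
proof -
  have "{x. t x \<noteq> x} = A \<union> t ` A"
    using A_cover permutes_not_in[OF t_permutes] by auto
  then show ?thesis using evenperm_involution[OF finite_A t_t A_disjoint] by auto
qed

lemma odd_transposition_commuting:
  assumes "a \<in> A"
  shows "Transposition.transpose a (t a) permutes \<Omega>" "\<not> evenperm (Transposition.transpose a (t a))"
    "Transposition.transpose a (t a) \<circ> t = t \<circ> Transposition.transpose a (t a)"
proof -
  show "Transposition.transpose a (t a) permutes \<Omega>"
    using assms A_subset image_A_subset by (intro permutes_swap_id) auto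
  show "\<not> evenperm (Transposition.transpose a (t a))"
    using moved_A[OF assms] by (simp add: evenperm_swap)
  show "Transposition.transpose a (t a) \<circ> t = t \<circ> Transposition.transpose a (t a)"
    by (auto simp: fun_eq_iff transpose_def) (metis t_t)+
qed

context
  fixes E \<pi> \<rho>
  assumes E: "E \<subseteq> A" and \<pi>: "\<pi> permutes A" and \<rho>: "\<rho> permutes {x\<in>\<Omega>. t x = x}"
begin

lemma centralizing_perm_A:
  assumes x: "x \<in> A"
  shows "centralizing_perm t E \<pi> \<rho> x = (if \<pi> x \<in> E then t (\<pi> x) else \<pi> x)"
proof -
  have "\<rho> x = x" using permutes_not_in[OF \<rho>] moved_A x by auto
  moreover have "\<pi> (t x) = t x" using permutes_not_in[OF \<pi>] t_notin_A x by auto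
  moreover have \<pi>x: "\<pi> x \<in> A" using permutes_in_image[OF \<pi>] x by auto
  moreover have "\<pi> (t (\<pi> x)) = t (\<pi> x)" using permutes_not_in[OF \<pi>] t_notin_A \<pi>x by auto
  moreover have "\<pi> x \<notin> t ` E" using \<pi>x A_disjoint E by auto
  ultimately show ?thesis by (auto simp: centralizing_perm_def swap_pairs_def)
qed

lemma centralizing_perm_image_A:
  assumes x: "x \<in> t ` A"
  shows "centralizing_perm t E \<pi> \<rho> x = (if \<pi> (t x) \<in> E then \<pi> (t x) else t (\<pi> (t x)))"
proof -
  have "\<rho> x = x" using permutes_not_in[OF \<rho>] moved_image_A x by auto
  moreover have "\<pi> x = x" using permutes_not_in[OF \<pi>] A_disjoint x by auto
  moreover have "t x \<in> A" using x by auto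
  then have \<pi>x: "\<pi> (t x) \<in> A" using permutes_in_image[OF \<pi>] by simp
  moreover note \<pi>x
  moreover have "\<pi> (t (\<pi> (t x))) = t (\<pi> (t x))" using permutes_not_in[OF \<pi>] t_notin_A \<pi>x by auto
  moreover have "t (\<pi> (t x)) \<in> t ` E \<longleftrightarrow> \<pi> (t x) \<in> E" by (metis image_iff t_t)
  moreover have "t (\<pi> (t x)) \<notin> E" using t_notin_A \<pi>x E by auto
  ultimately show ?thesis by (auto simp: centralizing_perm_def swap_pairs_def)
qed

lemma centralizing_perm_fixed:
  assumes x: "x \<in> \<Omega>" "t x = x"
  shows "centralizing_perm t E \<pi> \<rho> x = \<rho> x"
proof -
  have \<rho>x: "\<rho> x \<in> \<Omega>" "t (\<rho> x) = \<rho> x" using permutes_in_image[OF \<rho>] x by auto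
  then have "\<pi> (\<rho> x) = \<rho> x" using permutes_not_in[OF \<pi>] moved_A by auto
  moreover have "\<rho> x \<notin> E \<union> t ` E" using \<rho>x E moved_A moved_image_A by auto
  ultimately show ?thesis using \<rho>x by (auto simp: centralizing_perm_def swap_pairs_def)
qed

lemma centralizing_perm_outside:
  assumes x: "x \<notin> \<Omega>"
  shows "centralizing_perm t E \<pi> \<rho> x = x"
proof -
  have "\<rho> x = x" "\<pi> x = x" "t x = x"
    using permutes_not_in[OF \<rho>] permutes_not_in[OF \<pi>] permutes_not_in[OF t_permutes] A_subset x by auto
  moreover have "x \<notin> E \<union> t ` E" using E A_subset image_A_subset x by auto
  ultimately show ?thesis by (auto simp: centralizing_perm_def swap_pairs_def)
qed

lemma centralizing_perm_permutes: "centralizing_perm t E \<pi> \<rho> permutes \<Omega>"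
proof -
  have "swap_pairs t E permutes \<Omega>"
  proof (rule involution_permutes)
    show "swap_pairs t E (swap_pairs t E x) = x" for x
      by (cases "x \<in> E \<union> t ` E") (auto simp: swap_pairs_def image_iff)
    show "x \<notin> \<Omega> \<Longrightarrow> swap_pairs t E x = x" for x
      using E A_subset image_A_subset by (auto simp: swap_pairs_def)
  qed
  moreover have "\<pi> permutes \<Omega>" "\<rho> permutes \<Omega>"
    using permutes_subset[OF \<pi> A_subset] permutes_subset[OF \<rho>] by auto
  ultimately show ?thesis
    unfolding centralizing_perm_def by (intro permutes_compose t_permutes)
qed

lemma centralizing_perm_commutes: "centralizing_perm t E \<pi> \<rho> \<circ> t = t \<circ> centralizing_perm t E \<pi> \<rho>"
proof
  fix x
  consider "x \<in> A" | "x \<in> t ` A" | "x \<in> \<Omega>" "t x = x" | "x \<notin> \<Omega>" using \<Omega>_cases by blast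
  then show "(centralizing_perm t E \<pi> \<rho> \<circ> t) x = (t \<circ> centralizing_perm t E \<pi> \<rho>) x"
  proof cases
    case 1
    then show ?thesis using centralizing_perm_A[of x] centralizing_perm_image_A[of "t x"] by simp
  next
    case 2
    then have "t x \<in> A" by auto
    then show ?thesis using 2 centralizing_perm_image_A[of x] centralizing_perm_A[of "t x"] by simp
  next
    case 3
    then have "\<rho> x \<in> \<Omega>" "t (\<rho> x) = \<rho> x" using permutes_in_image[OF \<rho>, of x] by auto
    then show ?thesis using 3 centralizing_perm_fixed by simp
  next
    case 4
    then show ?thesis using centralizing_perm_outside permutes_not_in[OF t_permutes] by simp
  qed
qed

end

lemma inj_on_centralizing_perm:
  "inj_on (\<lambda>(E, \<pi>, \<rho>). centralizing_perm t E \<pi> \<rho>)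
     (Pow A \<times> {\<pi>. \<pi> permutes A} \<times> {\<rho>. \<rho> permutes {x\<in>\<Omega>. t x = x}})"
proof (rule inj_onI, clarsimp)
  fix E1 \<pi>1 \<rho>1 E2 \<pi>2 \<rho>2
  assume E1: "E1 \<subseteq> A" and \<pi>1: "\<pi>1 permutes A" and \<rho>1: "\<rho>1 permutes {x\<in>\<Omega>. t x = x}"
    and E2: "E2 \<subseteq> A" and \<pi>2: "\<pi>2 permutes A" and \<rho>2: "\<rho>2 permutes {x\<in>\<Omega>. t x = x}"
    and eq: "centralizing_perm t E1 \<pi>1 \<rho>1 = centralizing_perm t E2 \<pi>2 \<rho>2"
  note c1 = centralizing_perm_A[OF E1 \<pi>1 \<rho>1] and c2 = centralizing_perm_A[OF E2 \<pi>2 \<rho>2]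
  have "\<pi>1 x = \<pi>2 x" for x
  proof (cases "x \<in> A")
    case True
    \<comment> \<open>the image of a point of A is \<open>\<pi> x\<close> or its mirror image, and only the former lies in A\<close>
    then have "\<pi>1 x \<in> A" "\<pi>2 x \<in> A" by (simp_all add: permutes_in_image[OF \<pi>1] permutes_in_image[OF \<pi>2])
    then show ?thesis using c1[OF True] c2[OF True] eq t_notin_A by (metis t_t)
  qed (simp add: permutes_not_in[OF \<pi>1] permutes_not_in[OF \<pi>2])
  then have \<pi>: "\<pi>1 = \<pi>2" by blast
  have "\<rho>1 x = \<rho>2 x" for x
  proof (cases "x \<in> \<Omega> \<and> t x = x")
    case True
    then show ?thesis
      using centralizing_perm_fixed[OF E1 \<pi>1 \<rho>1] centralizing_perm_fixed[OF E2 \<pi>2 \<rho>2] eq by metis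
  qed (auto simp: permutes_not_in[OF \<rho>1] permutes_not_in[OF \<rho>2])
  then have \<rho>: "\<rho>1 = \<rho>2" by blast
  have "y \<in> E1 \<longleftrightarrow> y \<in> E2" if y: "y \<in> A" for y
  proof -
    have "y \<in> \<pi>1 ` A" using permutes_image[OF \<pi>1] y by simp
    then obtain x where x: "x \<in> A" "\<pi>1 x = y" by blast
    have "y \<in> E1 \<longleftrightarrow> centralizing_perm t E1 \<pi>1 \<rho>1 x \<notin> A" using c1[OF x(1)] x y t_notin_A by auto
    moreover have "y \<in> E2 \<longleftrightarrow> centralizing_perm t E2 \<pi>2 \<rho>2 x \<notin> A"
      using c2[OF x(1)] x y t_notin_A \<pi> by auto
    ultimately show ?thesis using eq by simp
  qed
  then show "E1 = E2 \<and> \<pi>1 = \<pi>2 \<and> \<rho>1 = \<rho>2" using E1 E2 \<pi> \<rho> by blast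
qed

lemma card_centralizer_ge:
  "2 ^ card A * fact (card A) * fact (card {x\<in>\<Omega>. t x = x})
     \<le> card {c. c permutes \<Omega> \<and> c \<circ> t = t \<circ> c}"
proof -
  let ?D = "Pow A \<times> {\<pi>. \<pi> permutes A} \<times> {\<rho>. \<rho> permutes {x\<in>\<Omega>. t x = x}}"
  have "2 ^ card A * fact (card A) * fact (card {x\<in>\<Omega>. t x = x}) = card ?D"
    using finite_A finite_\<Omega> by (simp add: card_cartesian_product card_Pow card_permutations)
  also have "\<dots> = card ((\<lambda>(E, \<pi>, \<rho>). centralizing_perm t E \<pi> \<rho>) ` ?D)"
    using card_image[OF inj_on_centralizing_perm] by simp
  also have "\<dots> \<le> card {c. c permutes \<Omega> \<and> c \<circ> t = t \<circ> c}"
    using finite_permutations[OF finite_\<Omega>] centralizing_perm_permutes centralizing_perm_commutes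
    by (intro card_mono) (auto elim: finite_subset[rotated])
  finally show ?thesis .
qed

lemma card_even_centralizer_ge:
  assumes "A \<noteq> {}"
  shows "2 ^ (card A - 1) * fact (card A) * fact (card {x\<in>\<Omega>. t x = x})
     \<le> card {c. c permutes \<Omega> \<and> evenperm c \<and> c \<circ> t = t \<circ> c}"
proof -
  define C where "C = {c. c permutes \<Omega> \<and> c \<circ> t = t \<circ> c}"
  obtain a where a: "a \<in> A" using assms by blast
  define w where "w = Transposition.transpose a (t a)"
  note w = odd_transposition_commuting[OF a, folded w_def]
  have "card C \<le> 2 * card {c\<in>C. evenperm c}"
  proof (rule card_le_twice_card_evenperm)
    show "finite C" unfolding C_def using finite_permutations[OF finite_\<Omega>] by (rule finite_subset[rotated]) auto
    show "w \<in> C" "\<not> evenperm w" using w by (auto simp: C_def)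
    show "permutation w" by (simp add: w_def permutation_swap_id)
    show "w \<circ> c \<in> C" if "c \<in> C" for c
      using that w by (auto simp: C_def permutes_compose) (metis comp_assoc)
    show "permutation c" if "c \<in> C" for c using that finite_\<Omega> permutation_permutes by (auto simp: C_def)
  qed
  moreover have "card A > 0" using assms finite_A by auto
  then have "(2::nat) ^ card A = 2 * 2 ^ (card A - 1)" by (cases "card A") auto
  moreover have "{c\<in>C. evenperm c} = {c. c permutes \<Omega> \<and> evenperm c \<and> c \<circ> t = t \<circ> c}"
    by (auto simp: C_def)
  ultimately have "2 * (2 ^ (card A - 1) * fact (card A) * fact (card {x\<in>\<Omega>. t x = x}))
      \<le> 2 * card {c. c permutes \<Omega> \<and> evenperm c \<and> c \<circ> t = t \<circ> c}"
    using card_centralizer_ge by (simp add: C_def mult.assoc)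
  then show ?thesis by simp
qed

end

section \<open>Symmetric and alternating groups\<close>

lemma group_Sym_grp: "group (Sym_grp S)"
proof (rule groupI)
  show "\<exists>y\<in>carrier (Sym_grp S). y \<otimes>\<^bsub>Sym_grp S\<^esub> x = \<one>\<^bsub>Sym_grp S\<^esub>" if "x \<in> carrier (Sym_grp S)" for x
    using that permutes_inv[of x S] permutes_inv_o(2)[of x S] by (auto simp: Sym_grp_def)
qed (auto simp: Sym_grp_def permutes_compose o_assoc)

lemma group_Alt_grp:
  assumes "finite S"
  shows "group (Alt_grp S)"
proof (rule groupI)
  show "\<exists>y\<in>carrier (Alt_grp S). y \<otimes>\<^bsub>Alt_grp S\<^esub> x = \<one>\<^bsub>Alt_grp S\<^esub>" if "x \<in> carrier (Alt_grp S)" for x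
  proof -
    have x: "x permutes S" "evenperm x" using that by (auto simp: Alt_grp_def)
    then have "permutation x" using assms permutation_permutes by blast
    then show ?thesis using x permutes_inv[of x S] permutes_inv_o(2)[of x S] evenperm_inv
      by (auto simp: Alt_grp_def)
  qed
  show "x \<otimes>\<^bsub>Alt_grp S\<^esub> y \<in> carrier (Alt_grp S)" if "x \<in> carrier (Alt_grp S)" "y \<in> carrier (Alt_grp S)" for x y
  proof -
    have "permutation x" "permutation y" using that assms permutation_permutes by (auto simp: Alt_grp_def)
    then show ?thesis using that by (auto simp: Alt_grp_def permutes_compose evenperm_comp)
  qed
qed (auto simp: Alt_grp_def o_assoc)

locale sym_or_alt =
  fixes G :: "('a \<Rightarrow> 'a) monoid" (structure) and S :: "'a set"
  assumes Sym_or_Alt: "G = Sym_grp S \<or> G = Alt_grp S" and finite_S: "finite S"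

sublocale sym_or_alt \<subseteq> group G
  using Sym_or_Alt finite_S group_Sym_grp group_Alt_grp by blast

context sym_or_alt
begin

lemma carrier_permutes: "p \<in> carrier G \<Longrightarrow> p permutes S"
  using Sym_or_Alt by (auto simp: Sym_grp_def Alt_grp_def)

lemma one_eq_id [simp]: "\<one> = id"
  using Sym_or_Alt by (auto simp: Sym_grp_def Alt_grp_def)

lemma mult_eq_comp [simp]: "x \<otimes> y = x \<circ> y"
  using Sym_or_Alt by (auto simp: Sym_grp_def Alt_grp_def)

lemma even_in_carrier: "p permutes S \<Longrightarrow> evenperm p \<Longrightarrow> p \<in> carrier G"
  using Sym_or_Alt by (auto simp: Sym_grp_def Alt_grp_def)

lemma inv_eq_inv [simp]:
  assumes x: "x \<in> carrier G"
  shows "inv x = Hilbert_Choice.inv x"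
proof -
  have xS: "x permutes S" using carrier_permutes[OF x] .
  then have "permutation x" using finite_S permutation_permutes by blast
  then have "evenperm (Hilbert_Choice.inv x) \<longleftrightarrow> evenperm x" by (rule evenperm_inv)
  then have "Hilbert_Choice.inv x \<in> carrier G"
    using Sym_or_Alt permutes_inv[OF xS] x by (auto simp: Sym_grp_def Alt_grp_def)
  then show ?thesis using inv_equality[OF _ x] permutes_inv_o(2)[OF xS] by simp
qed

lemma carrier_subset_permutations: "carrier G \<subseteq> {p. p permutes S}"
  using carrier_permutes by blast

lemma finite_carrier: "finite (carrier G)"
  by (rule finite_subset[OF carrier_subset_permutations finite_permutations[OF finite_S]])

lemma order_le_fact: "order G \<le> fact (card S)"
proof -
  have "order G \<le> card {p. p permutes S}"
    unfolding order_def by (rule card_mono[OF finite_permutations[OF finite_S] carrier_subset_permutations])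
  then show ?thesis using card_permutations[OF refl finite_S] by simp
qed

lemma conjugate_in_carrier:
  assumes w: "w permutes S" "\<not> evenperm w" "w \<circ> t = t \<circ> w" and x: "x permutes S"
  shows "\<exists>y\<in>carrier G. y \<otimes> t \<otimes> inv y = x \<circ> t \<circ> Hilbert_Choice.inv x"
proof (cases "evenperm x")
  case True
  then show ?thesis using even_in_carrier[OF x] by (intro bexI[of _ x]) auto
next
  case False
  have perm: "permutation x" "permutation w" using x w(1) finite_S permutation_permutes by blast+
  have y: "x \<circ> w \<in> carrier G"
    using False w(2) x w(1) by (intro even_in_carrier) (auto simp: permutes_compose evenperm_comp[OF perm])
  have "Hilbert_Choice.inv (x \<circ> w) = Hilbert_Choice.inv w \<circ> Hilbert_Choice.inv x"
    using o_inv_distrib permutes_bij x w(1) by blast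
  moreover have "w \<circ> t \<circ> Hilbert_Choice.inv w = t"
    using w(3) permutes_inv_o(1)[OF w(1)] by (metis comp_assoc comp_id)
  ultimately have "(x \<circ> w) \<circ> t \<circ> Hilbert_Choice.inv (x \<circ> w) = x \<circ> t \<circ> Hilbert_Choice.inv x"
    by (metis comp_assoc)
  then show ?thesis using y by (intro bexI[of _ "x \<circ> w"]) auto
qed

end

section \<open>The product action\<close>

lemma finite_prod_dom: "finite (prod_dom k r)"
  by (simp add: prod_dom_def finite_PiE)

lemma card_prod_dom: "card (prod_dom k r) = k ^ r"
  by (simp add: prod_dom_def card_PiE)

lemma finite_card_wreath_prod_action:
  "finite (wreath_prod_action k r) \<and> card (wreath_prod_action k r) \<le> fact k ^ r * fact r"
proof -
  define D where "D = {\<sigma>. \<sigma> permutes {0..<r}} \<times> PiE {0..<r} (\<lambda>_. {p. p permutes {0..<k}})"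
  define \<Phi> where "\<Phi> = (\<lambda>(\<sigma>::nat \<Rightarrow> nat, x::nat \<Rightarrow> nat \<Rightarrow> nat). (\<lambda>\<gamma>::nat \<Rightarrow> nat. if \<gamma> \<in> prod_dom k r
                     then restrict (\<lambda>j. x (Hilbert_Choice.inv \<sigma> j) (\<gamma> (Hilbert_Choice.inv \<sigma> j))) {0..<r}
                     else \<gamma>))"
  have finD: "finite D" by (auto simp: D_def finite_permutations intro!: finite_PiE)
  have sub: "wreath_prod_action k r \<subseteq> \<Phi> ` D"
  proof
    fix p assume "p \<in> wreath_prod_action k r"
    then obtain \<sigma> x where \<sigma>: "\<sigma> permutes {0..<r}" and x: "\<forall>i<r. x i permutes {0..<k}"
      and p: "p = (\<lambda>\<gamma>. if \<gamma> \<in> prod_dom k r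
                     then restrict (\<lambda>j. x (Hilbert_Choice.inv \<sigma> j) (\<gamma> (Hilbert_Choice.inv \<sigma> j))) {0..<r}
                     else \<gamma>)" unfolding wreath_prod_action_def by blast
    have "Hilbert_Choice.inv \<sigma> j \<in> {0..<r}" if "j \<in> {0..<r}" for j
      using permutes_in_image[OF permutes_inv[OF \<sigma>]] that by auto
    then have "p = \<Phi> (\<sigma>, restrict x {0..<r})"
      unfolding p \<Phi>_def by (auto simp: fun_eq_iff restrict_def)
    moreover have "(\<sigma>, restrict x {0..<r}) \<in> D" using \<sigma> x by (auto simp: D_def)
    ultimately show "p \<in> \<Phi> ` D" by blast
  qed
  have "card (wreath_prod_action k r) \<le> card D"
    using finD card_mono[OF _ sub] card_image_le[OF finD, of \<Phi>] by simp
  also have "card D = fact r * fact k ^ r"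
    by (simp add: D_def card_cartesian_product card_PiE card_permutations)
  finally show ?thesis using finite_subset[OF sub] finD by (simp add: mult.commute)
qed

definition two_coord_perm :: "nat \<Rightarrow> nat \<Rightarrow> (nat \<Rightarrow> nat) \<Rightarrow> (nat \<Rightarrow> nat) \<Rightarrow> (nat \<Rightarrow> nat) \<Rightarrow> nat \<Rightarrow> nat" where
  "two_coord_perm k r u v \<gamma> = (if \<gamma> \<in> prod_dom k r then \<gamma>(0 := u (\<gamma> 0), 1 := v (\<gamma> 1)) else \<gamma>)"

abbreviation swap01 :: "nat \<Rightarrow> nat" where
  "swap01 \<equiv> Transposition.transpose 0 1"

abbreviation coord_swap :: "nat \<Rightarrow> nat \<Rightarrow> (nat \<Rightarrow> nat) \<Rightarrow> nat \<Rightarrow> nat" where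
  "coord_swap k r \<equiv> two_coord_perm k r swap01 swap01"

lemma swap01_permutes: "k \<ge> 2 \<Longrightarrow> swap01 permutes {0..<k}"
  by (rule permutes_swap_id) auto

lemma two_coord_perm_in_prod_dom:
  assumes r: "r \<ge> 2" and u: "u permutes {0..<k}" and v: "v permutes {0..<k}" and \<gamma>: "\<gamma> \<in> prod_dom k r"
  shows "two_coord_perm k r u v \<gamma> \<in> prod_dom k r"
proof -
  have "\<gamma> 0 \<in> {0..<k}" "\<gamma> 1 \<in> {0..<k}" using \<gamma> r by (auto simp: prod_dom_def PiE_def Pi_def)
  then have "u (\<gamma> 0) \<in> {0..<k}" "v (\<gamma> 1) \<in> {0..<k}"
    using permutes_in_image[OF u] permutes_in_image[OF v] by auto
  then show ?thesis using \<gamma> r by (auto simp: two_coord_perm_def prod_dom_def PiE_def Pi_def extensional_def)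
qed

lemma two_coord_perm_comp:
  assumes r: "r \<ge> 2" and u': "u' permutes {0..<k}" and v': "v' permutes {0..<k}"
  shows "two_coord_perm k r u v \<circ> two_coord_perm k r u' v' = two_coord_perm k r (u \<circ> u') (v \<circ> v')"
proof
  fix \<gamma>
  show "(two_coord_perm k r u v \<circ> two_coord_perm k r u' v') \<gamma> = two_coord_perm k r (u \<circ> u') (v \<circ> v') \<gamma>"
  proof (cases "\<gamma> \<in> prod_dom k r")
    case True
    then have "two_coord_perm k r u' v' \<gamma> \<in> prod_dom k r" using two_coord_perm_in_prod_dom[OF r u' v'] by blast
    then show ?thesis using True by (simp add: two_coord_perm_def)
  qed (simp add: two_coord_perm_def)
qed

lemma two_coord_perm_id [simp]: "two_coord_perm k r id id = id"
  by (auto simp: two_coord_perm_def fun_eq_iff)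

lemma two_coord_perm_inverse:
  assumes r: "r \<ge> 2" and u: "u permutes {0..<k}" and v: "v permutes {0..<k}"
  shows "two_coord_perm k r u v \<circ> two_coord_perm k r (Hilbert_Choice.inv u) (Hilbert_Choice.inv v) = id"
    and "two_coord_perm k r (Hilbert_Choice.inv u) (Hilbert_Choice.inv v) \<circ> two_coord_perm k r u v = id"
  using two_coord_perm_comp[OF r permutes_inv[OF u] permutes_inv[OF v]] two_coord_perm_comp[OF r u v]
    permutes_inv_o[OF u] permutes_inv_o[OF v] by simp_all

lemma inv_two_coord_perm:
  assumes "r \<ge> 2" and "u permutes {0..<k}" and "v permutes {0..<k}"
  shows "Hilbert_Choice.inv (two_coord_perm k r u v)
           = two_coord_perm k r (Hilbert_Choice.inv u) (Hilbert_Choice.inv v)"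
  using inv_unique_comp two_coord_perm_inverse[OF assms] by blast

lemma two_coord_perm_permutes:
  assumes "r \<ge> 2" and "u permutes {0..<k}" and "v permutes {0..<k}"
  shows "two_coord_perm k r u v permutes prod_dom k r"
  unfolding permutes_def
proof (intro conjI allI impI)
  show "two_coord_perm k r u v x = x" if "x \<notin> prod_dom k r" for x using that by (simp add: two_coord_perm_def)
  show "\<exists>!x. two_coord_perm k r u v x = y" for y
    using two_coord_perm_inverse[OF assms] by (metis comp_apply id_apply)
qed

lemma two_coord_perm_in_wreath_prod_action:
  assumes r: "r \<ge> 2" and u: "u permutes {0..<k}" and v: "v permutes {0..<k}"
  shows "two_coord_perm k r u v \<in> wreath_prod_action k r"
proof -
  define x where "x i = (if i = 0 then u else if i = 1 then v else id)" for i :: nat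
  have "two_coord_perm k r u v = (\<lambda>\<gamma>. if \<gamma> \<in> prod_dom k r
          then restrict (\<lambda>j. x (Hilbert_Choice.inv id j) (\<gamma> (Hilbert_Choice.inv id j))) {0..<r} else \<gamma>)"
  proof
    fix \<gamma>
    show "two_coord_perm k r u v \<gamma> = (if \<gamma> \<in> prod_dom k r
          then restrict (\<lambda>j. x (Hilbert_Choice.inv id j) (\<gamma> (Hilbert_Choice.inv id j))) {0..<r} else \<gamma>)"
    proof (cases "\<gamma> \<in> prod_dom k r")
      case True
      then have "\<gamma> j = undefined" if "j \<ge> r" for j using that by (auto simp: prod_dom_def PiE_def extensional_def)
      then show ?thesis using True r by (auto simp: two_coord_perm_def x_def fun_eq_iff inv_id)
    qed (simp add: two_coord_perm_def)
  qed
  moreover have "\<forall>i<r. x i permutes {0..<k}" using u v by (auto simp: x_def)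
  ultimately show ?thesis unfolding wreath_prod_action_def using permutes_id by blast
qed

lemma two_coord_perm_inj:
  assumes r: "r \<ge> 2" and u: "u permutes {0..<k}" "u' permutes {0..<k}"
    and v: "v permutes {0..<k}" "v' permutes {0..<k}"
    and eq: "two_coord_perm k r u v = two_coord_perm k r u' v'"
  shows "u = u' \<and> v = v'"
proof -
  have "u c = u' c \<and> v c = v' c" for c
  proof (cases "c < k")
    case True
    define \<gamma> where "\<gamma> = restrict (\<lambda>_. c) {0..<r}"
    have "\<gamma> \<in> prod_dom k r" using True by (simp add: \<gamma>_def prod_dom_def)
    then have "two_coord_perm k r w z \<gamma> 0 = w c \<and> two_coord_perm k r w z \<gamma> 1 = z c" for w z
      using r by (simp add: two_coord_perm_def \<gamma>_def)
    then show ?thesis using eq by metis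
  qed (simp add: permutes_not_in[OF u(1)] permutes_not_in[OF u(2)] permutes_not_in[OF v(1)] permutes_not_in[OF v(2)])
  then show ?thesis by auto
qed

lemma conjugate_swap01:
  assumes a: "a permutes {0..<k}"
  shows "a \<circ> swap01 \<circ> Hilbert_Choice.inv a = Transposition.transpose (a 0) (a 1)"
proof -
  have "Transposition.transpose (a 0) (a 1) \<circ> a = a \<circ> swap01"
    using transpose_comp_eq[OF permutes_bij[OF a], of "a 0" "a 1"] permutes_inverses(2)[OF a] by simp
  then have "Transposition.transpose (a 0) (a 1) \<circ> a \<circ> Hilbert_Choice.inv a = a \<circ> swap01 \<circ> Hilbert_Choice.inv a"
    by simp
  then show ?thesis using permutes_inv_o(1)[OF a] by (simp add: o_assoc[symmetric])
qed

lemma conjugate_coord_swap: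
  assumes r: "r \<ge> 2" and k: "k \<ge> 2" and a: "a permutes {0..<k}" and b: "b permutes {0..<k}"
  shows "two_coord_perm k r a b \<circ> coord_swap k r \<circ> Hilbert_Choice.inv (two_coord_perm k r a b)
       = two_coord_perm k r (Transposition.transpose (a 0) (a 1)) (Transposition.transpose (b 0) (b 1))"
proof -
  have ia: "Hilbert_Choice.inv a permutes {0..<k}" "Hilbert_Choice.inv b permutes {0..<k}"
    using permutes_inv a b by blast+
  have "two_coord_perm k r a b \<circ> coord_swap k r \<circ> Hilbert_Choice.inv (two_coord_perm k r a b)
      = two_coord_perm k r (a \<circ> swap01 \<circ> Hilbert_Choice.inv a) (b \<circ> swap01 \<circ> Hilbert_Choice.inv b)"
    unfolding inv_two_coord_perm[OF r a b]
    using two_coord_perm_comp[OF r swap01_permutes[OF k] swap01_permutes[OF k], of a b]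
      two_coord_perm_comp[OF r ia, of "a \<circ> swap01" "b \<circ> swap01"] by simp
  then show ?thesis using conjugate_swap01[OF a] conjugate_swap01[OF b] by simp
qed

section \<open>Factorial estimates\<close>

lemma fact_add_le_fact_mult_power: "fact (f + d) \<le> fact f * (f + d) ^ d"
proof (induction d)
  case 0 then show ?case by simp
next
  case (Suc d)
  have "fact (f + Suc d) = (f + Suc d) * fact (f + d)" by (simp add: algebra_simps)
  also have "\<dots> \<le> (f + Suc d) * (fact f * (f + d) ^ d)" using Suc by (intro mult_left_mono) auto
  also have "\<dots> \<le> (f + Suc d) * (fact f * (f + Suc d) ^ d)"
    by (intro mult_left_mono power_mono) auto
  also have "\<dots> = fact f * (f + Suc d) ^ Suc d" by (simp add: algebra_simps)
  finally show ?case .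
qed

lemma fact_le_power_pred: "n \<ge> 1 \<Longrightarrow> fact n \<le> n ^ (n - 1)"
proof (induction n rule: nat_induct_at_least)
  case base then show ?case by simp
next
  case (Suc n)
  have "fact (Suc n) = Suc n * fact n" by simp
  also have "\<dots> \<le> Suc n * n ^ (n - 1)" using Suc by (intro mult_left_mono) auto
  also have "\<dots> \<le> Suc n * Suc n ^ (n - 1)" by (intro mult_left_mono power_mono) auto
  also have "\<dots> = Suc n ^ (Suc n - 1)" using Suc by (cases n) auto
  finally show ?case .
qed

lemma power_le_exp_mult_fact: "real n ^ n \<le> exp (real n) * fact n"
proof (induction n)
  case 0 then show ?case by simp
next
  case (Suc n)
  show ?case
  proof (cases "n = 0")
    case True then show ?thesis by (simp add: exp_ge_add_one_self[of 1, simplified] order_trans[OF _ exp_ge_add_one_self])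
  next
    case False
    have e: "(1 + 1 / of_nat n) ^ n \<le> exp (1::real)"
      by (rule exp_ge_one_plus_x_over_n_power_n) (use False in auto)
    have "real (Suc n) ^ n = real n ^ n * (1 + 1 / real n) ^ n"
      using False by (simp add: power_mult_distrib[symmetric] field_simps)
    also have "\<dots> \<le> exp (real n) * fact n * exp 1"
      using Suc e by (intro mult_mono) auto
    finally have "real (Suc n) ^ n \<le> exp (real n) * fact n * exp 1" .
    then have "real (Suc n) * real (Suc n) ^ n \<le> real (Suc n) * (exp (real n) * fact n * exp 1)"
      by (intro mult_left_mono) auto
    also have "\<dots> = exp (real (Suc n)) * fact (Suc n)"
      by (simp add: exp_add[symmetric] algebra_simps)
    finally show ?thesis by simp
  qed
qed

lemma ln_fact_ge: "n \<ge> 1 \<Longrightarrow> real n * ln (real n) - real n \<le> ln (fact n)"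
proof -
  assume n: "n \<ge> 1"
  have "ln (real n ^ n) \<le> ln (exp (real n) * fact n)"
    using power_le_exp_mult_fact[of n] n by (subst ln_le_cancel_iff) auto
  then show ?thesis using n by (simp add: ln_realpow ln_mult)
qed

lemma linear_le_four_pow5: "r \<ge> 3 \<Longrightarrow> 3 * r + 7 \<le> 4 * (5::nat) ^ (r - 2)"
proof (induction r rule: nat_induct_at_least)
  case base then show ?case by simp
next
  case (Suc n)
  have "Suc n - 2 = Suc (n - 2)" using Suc by auto
  then have "(5::nat) ^ (Suc n - 2) = 5 * 5 ^ (n - 2)" by simp
  then show ?case using Suc by simp
qed

lemma le_pow5: "r \<ge> 3 \<Longrightarrow> r \<le> (5::nat) ^ (r - 2)"
proof (induction r rule: nat_induct_at_least)
  case base then show ?case by simp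
next
  case (Suc n)
  have "Suc n - 2 = Suc (n - 2)" using Suc by auto
  then have "(5::nat) ^ (Suc n - 2) = 5 * 5 ^ (n - 2)" by simp
  then show ?case using Suc by simp
qed

lemma polynomial_inequality_r_ge_3:
  fixes K R :: real
  assumes K: "K \<ge> 5" and R: "R \<ge> 3"
  shows "(K - 2)^2 * (15 * R - 20) + 6 * (K - 1) * (R - 9) \<ge> 5 * R * (K - 1)"
proof -
  have k0: "0 \<le> (4 * K - 5) * (K - 5)" using K by simp
  have k1: "4 * (K - 2)^2 \<ge> 9 * (K - 1)" using k0 by (simp add: power2_eq_square algebra_simps)
  have r1: "15 * R - 20 \<ge> 25/3 * R" using R by simp
  have "(K - 2)^2 * (15 * R - 20) \<ge> (K - 2)^2 * (25/3 * R)" using r1 by (intro mult_left_mono) auto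
  moreover have "(K - 2)^2 * (25/3 * R) \<ge> 9/4 * (K - 1) * (25/3 * R)" using k1 R by (intro mult_right_mono) auto
  moreover have "6 * (K - 1) * (R - 9) \<ge> - 12 * R * (K - 1)"
  proof -
    have "6 * (K - 1) * (R - 9) + 12 * R * (K - 1) = (K - 1) * (18 * R - 54)" by (simp add: algebra_simps)
    moreover have "(K - 1) * (18 * R - 54) \<ge> 0" using K R by simp
    ultimately show ?thesis by linarith
  qed
  moreover have "9/4 * (K - 1) * (25/3 * R) = 75/4 * R * (K - 1)" by (simp add: algebra_simps)
  moreover have "R * (K - 1) \<ge> 0" using R K by simp
  ultimately show ?thesis by linarith
qed

lemma log_inequality_core_r_ge_3:
  fixes K R Av L l2 lr lk1 lk2 :: real
  assumes K: "K \<ge> 5" and R: "R \<ge> 3" and Av: "Av \<ge> 1" "4 * Av \<ge> 3 * R + 7"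
    and L: "L > 0" and lr: "lr \<le> (R - 2) * L" and l2: "l2 \<le> L / 2"
    and lk1: "2 * l2 + lk1 \<ge> 1 + L" and lk2: "2 * lk2 \<ge> 2 * L - 2 * ln (5/3)"
    and c: "1 + 2 * ln (5/3) \<le> 4/3 * L"
    and J: "J = 2 * (K - 1) * Av" and F: "Fv = (K - 2)^2 * Av"
  shows "8 * J * R * L + 5 * R * (K - 1) * L + 5 * R * lr
     < 9 * (J - 1) * l2 + 9 * (J * (l2 + lk1 + (R - 2) * L) - J) + 5 * (Fv * (2 * lk2 + (R - 2) * L) - Fv)"
proof -
  have J0: "J \<ge> 0" and F0: "Fv \<ge> 0" using J F K Av by auto
  have T1: "9 * J * (2 * l2 + lk1) \<ge> 9 * J * (1 + L)" using lk1 J0 by (intro mult_left_mono) auto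
  have T2a: "5 * Fv * (2 * lk2) \<ge> 5 * Fv * (2 * L - 2 * ln (5/3))" using lk2 F0 by (intro mult_left_mono) auto
  have T2b: "5 * Fv * (1 + 2 * ln (5/3)) \<le> 5 * Fv * (4/3 * L)" using c F0 by (intro mult_left_mono) auto
  have T3: "5 * R * lr \<le> 5 * R * ((R - 2) * L)" using lr R by (intro mult_left_mono) auto
  have B: "(K - 2)^2 * (15 * R - 20) + 6 * (K - 1) * (R - 9) \<ge> 5 * R * (K - 1)"
    using K R by (rule polynomial_inequality_r_ge_3)
  have P0: "Av * ((K - 2)^2 * (15 * R - 20) + 6 * (K - 1) * (R - 9)) \<ge> Av * (5 * R * (K - 1))"
    using B Av by (intro mult_left_mono) auto
  have P1: "Av * (5 * R * (K - 1)) - 15 * R * (K - 1) - 15 * R * (R - 2) - 27/2 > 0"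
  proof -
    have "5 * R * (K - 1) * (Av - 3) \<ge> 5 * R * 4 * (Av - 3)"
      using K R Av by (intro mult_right_mono) auto
    moreover have "5 * R * 4 * (Av - 3) \<ge> 5 * R * (3 * R - 5)" using Av R by simp
    moreover have "Av * (5 * R * (K - 1)) - 15 * R * (K - 1) = 5 * R * (K - 1) * (Av - 3)" by (simp add: algebra_simps)
    moreover have "5 * R * (3 * R - 5) = 15 * R * (R - 2) + 5 * R" by (simp add: algebra_simps)
    ultimately show ?thesis using R by linarith
  qed
  have P: "J * (R - 9) + Fv * (5 * R - 20/3) - 5 * R * (K - 1) - 5 * R * (R - 2) - 9/2 > 0"
  proof -
    have "3 * (J * (R - 9) + Fv * (5 * R - 20/3) - 5 * R * (K - 1) - 5 * R * (R - 2) - 9/2)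
        = Av * ((K - 2)^2 * (15 * R - 20) + 6 * (K - 1) * (R - 9)) - 15 * R * (K - 1) - 15 * R * (R - 2) - 27/2"
      unfolding J F by (simp add: algebra_simps)
    moreover have "Av * ((K - 2)^2 * (15 * R - 20) + 6 * (K - 1) * (R - 9)) - 15 * R * (K - 1) - 15 * R * (R - 2) - 27/2 > 0"
      using P0 P1 by linarith
    ultimately show ?thesis by (smt (verit))
  qed
  have PL: "L * (J * (R - 9) + Fv * (5 * R - 20/3) - 5 * R * (K - 1) - 5 * R * (R - 2) - 9/2) > 0"
    using P L by simp
  have l2': "9 * l2 \<le> 9/2 * L" using l2 by simp
  show ?thesis using T1 T2a T2b T3 PL l2' by (simp add: algebra_simps)
qed

lemma log_inequality_core_r_eq_2:
  fixes K Av L l2 lk1 lk2 :: real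
  assumes K: "K \<ge> 8" and L: "L > 0" and l2: "l2 \<le> L / 3"
    and lk1: "2 * l2 + lk1 \<ge> 1 + L" and lk2: "2 * lk2 \<ge> 2 * L - 2 * ln (4/3)"
    and c: "1 + 2 * ln (4/3) \<le> 5/6 * L"
    and J: "J = 2 * (K - 1)" and F: "Fv = (K - 2)^2"
  shows "8 * J * 2 * L + 5 * 2 * (K - 1) * L + 5 * 2 * l2
     < 9 * (J - 1) * l2 + 9 * (J * (l2 + lk1 + (2 - 2) * L) - J) + 5 * (Fv * (2 * lk2 + (2 - 2) * L) - Fv)"
proof -
  have J0: "J \<ge> 0" and F0: "Fv \<ge> 0" using J F K by auto
  have T1: "9 * J * (2 * l2 + lk1) \<ge> 9 * J * (1 + L)" using lk1 J0 by (intro mult_left_mono) auto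
  have T2a: "5 * Fv * (2 * lk2) \<ge> 5 * Fv * (2 * L - 2 * ln (4/3))" using lk2 F0 by (intro mult_left_mono) auto
  have T2b: "5 * Fv * (1 + 2 * ln (4/3)) \<le> 5 * Fv * (5/6 * L)" using c F0 by (intro mult_left_mono) auto
  have P: "35 * (K - 2)^2 - 144 * (K - 1) - 38 > 0"
  proof -
    have "(K - 2) * (K - 2) \<ge> 6 * (K - 2)" using K by (intro mult_right_mono) auto
    then have q: "(K - 2)^2 \<ge> 6 * (K - 2)" by (simp add: power2_eq_square)
    define q where "q = (K - 2)^2"
    have "q \<ge> 6 * K - 12" using q unfolding q_def by simp
    then have "35 * q - 144 * (K - 1) - 38 > 0" using K by (simp add: algebra_simps)
    then show ?thesis unfolding q_def .
  qed
  have PL: "L * (35 * (K - 2)^2 - 144 * (K - 1) - 38) > 0" using P L by simp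
  show ?thesis using T1 T2a T2b PL l2 unfolding J F by (simp add: algebra_simps)
qed


lemma ln_fact_add_le:
  assumes "f + d \<ge> 1"
  shows "ln (fact (f + d) :: real) \<le> ln (fact f) + real d * ln (real (f + d))"
proof -
  have "real (fact (f + d)) \<le> real (fact f * (f + d) ^ d)"
    by (rule of_nat_mono[OF fact_add_le_fact_mult_power])
  then have "ln (fact (f + d) :: real) \<le> ln (fact f * real (f + d) ^ d)"
    using assms by (subst ln_le_cancel_iff) auto
  also have "\<dots> = ln (fact f) + real d * ln (real (f + d))"
    using assms by (simp add: ln_mult ln_realpow)
  finally show ?thesis .
qed

lemma ln_fact_le_pred:
  assumes "n \<ge> 1"
  shows "ln (fact n :: real) \<le> (real n - 1) * ln (real n)"
proof -
  have "real (fact n) \<le> real (n ^ (n - 1))" by (rule of_nat_mono[OF fact_le_power_pred[OF assms]])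
  then have "ln (fact n :: real) \<le> ln (real n ^ (n - 1))" using assms by (subst ln_le_cancel_iff) auto
  then show ?thesis using assms by (simp add: ln_realpow of_nat_diff)
qed

lemma ln_fact_le:
  assumes "n \<ge> 1"
  shows "ln (fact n :: real) \<le> real n * ln (real n)"
proof -
  have "ln (fact n :: real) \<le> ln (real n ^ n)"
    using fact_le_power[of n] assms by (subst ln_le_cancel_iff) auto
  then show ?thesis using assms by (simp add: ln_realpow)
qed

lemma ln_3_ge_1: "1 \<le> ln (3::real)"
  using exp_le by (subst ln_ge_iff) auto

lemma ln_pred_ge:
  fixes K :: real
  assumes K: "K \<ge> 5"
  shows "1 + ln K \<le> 2 * ln 2 + ln (K - 1)"
proof -
  have "ln (3 * K) \<le> ln (4 * (K - 1))" using K by (subst ln_le_cancel_iff) auto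
  moreover have "ln (4 * (K - 1)) = ln 4 + ln (K - 1)" using K by (intro ln_mult_pos) auto
  moreover have "ln (3 * K) = ln 3 + ln K" using K by (intro ln_mult_pos) auto
  moreover have "ln (4::real) = 2 * ln 2" using ln_realpow[of 2 2] by simp
  ultimately show ?thesis using ln_3_ge_1 by (simp add: algebra_simps)
qed

lemma ln_five_thirds_bound:
  fixes K :: real
  assumes K: "K \<ge> 5"
  shows "1 + 2 * ln (5/3) \<le> 4/3 * ln K"
proof -
  have "ln ((25/3) ^ 3) \<le> ln ((5::real) ^ 4)" by (subst ln_le_cancel_iff) (auto simp: power_divide)
  then have "3 * ln (25/3) \<le> 4 * ln (5::real)" by (subst (asm) (1 2) ln_realpow) auto
  then have "3 * (ln 25 - ln 3) \<le> 4 * ln (5::real)" by (simp add: ln_div)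
  moreover have "ln (25::real) = 2 * ln 5" using ln_realpow[of 5 2] by simp
  moreover have "ln (5/3::real) = ln 5 - ln 3" by (simp add: ln_div)
  moreover have "ln 5 \<le> ln K" using K by (subst ln_le_cancel_iff) auto
  ultimately show ?thesis using ln_3_ge_1 by (simp add: algebra_simps)
qed

lemma ln_four_thirds_bound:
  fixes K :: real
  assumes K: "K \<ge> 8"
  shows "1 + 2 * ln (4/3) \<le> 5/6 * ln K"
proof -
  have "ln ((16/3) ^ 6) \<le> ln ((8::real) ^ 5)" by (subst ln_le_cancel_iff) (auto simp: power_divide)
  then have "6 * ln (16/3) \<le> 5 * ln (8::real)" by (subst (asm) (1 2) ln_realpow) auto
  then have "6 * (ln 16 - ln 3) \<le> 5 * ln (8::real)" by (simp add: ln_div)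
  moreover have "ln (16::real) = 4 * ln 2" using ln_realpow[of 2 4] by simp
  moreover have "ln (8::real) = 3 * ln 2" using ln_realpow[of 2 3] by simp
  moreover have "ln (4/3::real) = 2 * ln 2 - ln 3" using ln_realpow[of 2 2] by (simp add: ln_div)
  moreover have "ln 8 \<le> ln K" using K by (subst ln_le_cancel_iff) auto
  ultimately show ?thesis using ln_3_ge_1 by (simp add: algebra_simps)
qed

lemma log_inequality_r_ge_3:
  fixes K R a :: real
  assumes K: "K \<ge> 5" and R: "R \<ge> 3" and a: "a \<ge> 1" "4 * a \<ge> 3 * R + 7" and "R \<le> a"
    and ln_a: "ln a = (R - 2) * ln K"
  defines "J \<equiv> 2 * (K - 1) * a" and "F \<equiv> (K - 2)^2 * a"
  shows "8 * J * R * ln K + 5 * R * (K - 1) * ln K + 5 * R * ln R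
     < 9 * (J - 1) * ln 2 + 9 * (J * ln J - J) + 5 * (F * ln F - F)"
proof -
  have L: "ln K > 0" using K by simp
  have lr: "ln R \<le> (R - 2) * ln K"
  proof -
    have "ln R \<le> ln a" using \<open>R \<le> a\<close> R by (subst ln_le_cancel_iff) auto
    then show ?thesis using ln_a by simp
  qed
  have l2: "ln 2 \<le> ln K / 2"
  proof -
    have "ln 4 \<le> ln K" using K by (subst ln_le_cancel_iff) auto
    moreover have "ln (4::real) = 2 * ln 2" using ln_realpow[of 2 2] by simp
    ultimately show ?thesis by simp
  qed
  have lk2: "2 * ln (K - 2) \<ge> 2 * ln K - 2 * ln (5/3)"
  proof -
    have "ln K \<le> ln ((K - 2) * (5/3))" using K by (subst ln_le_cancel_iff) auto
    moreover have "ln ((K - 2) * (5/3)) = ln (K - 2) + ln (5/3)" using K by (intro ln_mult_pos) auto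
    ultimately show ?thesis by simp
  qed
  have c: "1 + 2 * ln (5/3) \<le> 4/3 * ln K" using K by (rule ln_five_thirds_bound)
  have lJ: "ln J = ln 2 + ln (K - 1) + (R - 2) * ln K"
  proof -
    have "ln J = ln (2 * (K - 1)) + ln a" unfolding J_def using K a by (intro ln_mult_pos) auto
    moreover have "ln (2 * (K - 1)) = ln 2 + ln (K - 1)" using K by (intro ln_mult_pos) auto
    ultimately show ?thesis using ln_a by simp
  qed
  have lF: "ln F = 2 * ln (K - 2) + (R - 2) * ln K"
  proof -
    have "ln F = ln ((K - 2)^2) + ln a" unfolding F_def using K a by (intro ln_mult_pos) auto
    then show ?thesis using K ln_a by (simp add: ln_realpow)
  qed
  show ?thesis
    unfolding lJ lF
    by (rule log_inequality_core_r_ge_3[OF K R a L lr l2 ln_pred_ge[OF K] lk2 c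
          meta_eq_to_obj_eq[OF J_def] meta_eq_to_obj_eq[OF F_def]])
qed

lemma log_inequality_r_eq_2:
  fixes K :: real
  assumes K: "K \<ge> 8"
  defines "J \<equiv> 2 * (K - 1)" and "F \<equiv> (K - 2)^2"
  shows "8 * J * 2 * ln K + 5 * 2 * (K - 1) * ln K + 5 * 2 * ln 2
     < 9 * (J - 1) * ln 2 + 9 * (J * ln J - J) + 5 * (F * ln F - F)"
proof -
  have K5: "K \<ge> 5" and L: "ln K > 0" using K by simp_all
  have l2: "ln 2 \<le> ln K / 3"
  proof -
    have "ln 8 \<le> ln K" using K by (subst ln_le_cancel_iff) auto
    moreover have "ln (8::real) = 3 * ln 2" using ln_realpow[of 2 3] by simp
    ultimately show ?thesis by simp
  qed
  have lk2: "2 * ln (K - 2) \<ge> 2 * ln K - 2 * ln (4/3)"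
  proof -
    have "ln K \<le> ln ((K - 2) * (4/3))" using K by (subst ln_le_cancel_iff) auto
    moreover have "ln ((K - 2) * (4/3)) = ln (K - 2) + ln (4/3)" using K by (intro ln_mult_pos) auto
    ultimately show ?thesis by simp
  qed
  have c: "1 + 2 * ln (4/3) \<le> 5/6 * ln K" using K by (rule ln_four_thirds_bound)
  have "ln J = ln 2 + ln (K - 1)" unfolding J_def using K by (intro ln_mult_pos) auto
  then have lJ: "ln J = ln 2 + ln (K - 1) + (2 - 2) * ln K" by simp
  have lF: "ln F = 2 * ln (K - 2) + (2 - 2) * ln K"
    unfolding F_def using K by (simp add: ln_realpow)
  show ?thesis
    unfolding lJ lF
    by (rule log_inequality_core_r_eq_2[OF K L l2 ln_pred_ge[OF K5] lk2 c
          meta_eq_to_obj_eq[OF J_def] meta_eq_to_obj_eq[OF F_def]])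
qed

lemma log_inequality:
  fixes k r :: nat
  assumes k: "k \<ge> 5" and r: "r \<ge> 2" and not_small: "\<not> (r = 2 \<and> k \<le> 7)"
  defines "K \<equiv> real k" and "R \<equiv> real r"
    and "j \<equiv> 2 * (k - 1) * k ^ (r - 2)" and "f \<equiv> (k - 2)^2 * k ^ (r - 2)"
  shows "8 * j * R * ln K + 5 * R * (K - 1) * ln K + 5 * R * ln R
     < 9 * (real j - 1) * ln 2 + 9 * (j * ln j - j) + 5 * (f * ln f - f)"
proof -
  define a where "a = real (k ^ (r - 2))"
  have K: "K \<ge> 5" and a: "a \<ge> 1" using k by (simp_all add: K_def a_def)
  have J: "real j = 2 * (K - 1) * a" and F: "real f = (K - 2)^2 * a"
    using k by (simp_all add: j_def f_def K_def a_def of_nat_diff)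
  have j1: "j \<ge> 1" using k by (simp add: j_def)
  have ln_a: "ln a = (R - 2) * ln K" using r k by (simp add: a_def ln_realpow R_def K_def of_nat_diff)
  show ?thesis
  proof (cases "r \<ge> 3")
    case True
    have "3 * r + 7 \<le> 4 * k ^ (r - 2)" "r \<le> k ^ (r - 2)"
      using linear_le_four_pow5[OF True] le_pow5[OF True] power_mono[of 5 k "r - 2"] k by auto
    then have "real (3 * r + 7) \<le> real (4 * k ^ (r - 2))" "real r \<le> real (k ^ (r - 2))"
      by (simp_all only: of_nat_le_iff)
    then have "4 * a \<ge> 3 * R + 7" "R \<le> a" by (simp_all add: a_def R_def)
    then show ?thesis using log_inequality_r_ge_3[OF K _ a _ _ ln_a] True J F j1 by (simp add: R_def of_nat_diff)
  next
    case False
    then have "r = 2" "K \<ge> 8" using r not_small by (auto simp: K_def)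
    then show ?thesis using log_inequality_r_eq_2[of K] J F j1 by (simp add: R_def a_def of_nat_diff)
  qed
qed

lemma factorial_inequality_generic:
  fixes k r :: nat
  assumes k: "k \<ge> 5" and r: "r \<ge> 2" and not_small: "\<not> (r = 2 \<and> k \<le> 7)"
  defines "j \<equiv> 2 * (k - 1) * k ^ (r - 2)" and "f \<equiv> (k - 2)^2 * k ^ (r - 2)"
  shows "fact (k ^ r) ^ 4 * (fact k ^ r * fact r) ^ 5 < (2 ^ (j - 1) * fact j * fact f :: nat) ^ 9"
proof -
  define K R where "K = real k" and "R = real r"
  have j1: "j \<ge> 1" and f1: "f \<ge> 1" using k by (auto simp: j_def f_def)
  have m: "k ^ r = f + 2 * j"
  proof -
    have "k ^ r = k^2 * k ^ (r - 2)" using r by (metis le_add_diff_inverse power_add)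
    moreover have "(k - 2)^2 + 4 * (k - 1) = k^2"
    proof -
      have "k = (k - 2) + 2" using k by simp
      then obtain k0 where "k = k0 + 2" by blast
      then show ?thesis by (simp add: power2_eq_square algebra_simps)
    qed
    ultimately show ?thesis unfolding f_def j_def by (metis add_mult_distrib mult.assoc mult_2 numeral_Bit0)
  qed
  have lm: "ln (real (k ^ r)) = R * ln K" by (simp add: ln_realpow R_def K_def)
  have key: "8 * j * R * ln K + 5 * R * (K - 1) * ln K + 5 * R * ln R
     < 9 * (real j - 1) * ln 2 + 9 * (j * ln j - j) + 5 * (f * ln f - f)"
    using log_inequality[OF k r not_small] by (simp add: K_def R_def j_def f_def)
  have "ln (fact (k ^ r) ^ 4 * (fact k ^ r * fact r) ^ 5 :: real)
      = 4 * ln (fact (k ^ r)) + 5 * (R * ln (fact k) + ln (fact r))"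
    by (simp add: ln_mult ln_realpow R_def)
  also have "\<dots> < 9 * ((real j - 1) * ln 2 + ln (fact j) + ln (fact f))"
  proof -
    have "ln (fact (k ^ r) :: real) \<le> ln (fact f) + 2 * j * (R * ln K)"
      using ln_fact_add_le[of f "2 * j"] f1 m lm by simp
    moreover have "R * ln (fact k :: real) \<le> R * ((K - 1) * ln K)"
      using ln_fact_le_pred[of k] k by (intro mult_left_mono) (auto simp: R_def K_def)
    ultimately show ?thesis
      using ln_fact_le[of r] ln_fact_ge[OF j1] ln_fact_ge[OF f1] key r by (simp add: R_def algebra_simps)
  qed
  also have "\<dots> = ln ((2 ^ (j - 1) * fact j * fact f) ^ 9 :: real)"
    using j1 by (simp add: ln_mult ln_realpow of_nat_diff)
  finally have "(fact (k ^ r) ^ 4 * (fact k ^ r * fact r) ^ 5 :: real) < (2 ^ (j - 1) * fact j * fact f) ^ 9"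
    by (subst (asm) ln_less_cancel_iff) auto
  then have "real (fact (k ^ r) ^ 4 * (fact k ^ r * fact r) ^ 5) < real ((2 ^ (j - 1) * fact j * fact f) ^ 9)"
    by simp
  then show ?thesis by (simp only: of_nat_less_iff)
qed

lemma factorial_inequality:
  fixes k r :: nat
  assumes k: "k \<ge> 5" and r: "r \<ge> 2"
  defines "j \<equiv> 2 * (k - 1) * k ^ (r - 2)" and "f \<equiv> (k - 2)^2 * k ^ (r - 2)"
  shows "fact (k ^ r) ^ 4 * (fact k ^ r * fact r) ^ 5
           < ((2 * (k - 2))^2 * (2 ^ (j - 1) * fact j * fact f) :: nat) ^ 9"
proof -
  have mono: "(2 ^ (j - 1) * fact j * fact f :: nat) ^ 9 \<le> ((2 * (k - 2))^2 * (2 ^ (j - 1) * fact j * fact f)) ^ 9"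
    using k by (intro power_mono) auto
  consider "r = 2" "k = 5" | "r = 2" "k = 6" | "r = 2" "k = 7" | "\<not> (r = 2 \<and> k \<le> 7)" using k by linarith
  then show ?thesis
  proof cases
    case 1
    \<comment> \<open>only here is the extra factor \<open>(2 (k - 2))\<^sup>2 = 36\<close> needed\<close>
    then show ?thesis by (simp add: j_def f_def fact_numeral)
  next
    case 2
    then have "fact (k ^ r) ^ 4 * (fact k ^ r * fact r) ^ 5 < (2 ^ (j - 1) * fact j * fact f :: nat) ^ 9"
      by (simp add: j_def f_def fact_numeral)
    then show ?thesis using mono by (rule less_le_trans)
  next
    case 3
    then have "fact (k ^ r) ^ 4 * (fact k ^ r * fact r) ^ 5 < (2 ^ (j - 1) * fact j * fact f :: nat) ^ 9"
      by (simp add: j_def f_def fact_numeral)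
    then show ?thesis using mono by (rule less_le_trans)
  next
    case 4
    then have "fact (k ^ r) ^ 4 * (fact k ^ r * fact r) ^ 5 < (2 ^ (j - 1) * fact j * fact f :: nat) ^ 9"
      unfolding j_def f_def by (rule factorial_inequality_generic[OF k r])
    then show ?thesis using mono by (rule less_le_trans)
  qed
qed

section \<open>The involution \<open>(\<tau>, \<tau>, 1, \<dots>, 1)\<close>\<close>

lemma coord_swap_involution:
  assumes r: "r \<ge> 2" and k: "k \<ge> 2"
  shows "coord_swap k r (coord_swap k r \<gamma>) = \<gamma>"
proof -
  have "coord_swap k r \<circ> coord_swap k r = id"
    using two_coord_perm_comp[OF r swap01_permutes[OF k] swap01_permutes[OF k]] by simp
  then show ?thesis by (metis comp_apply id_apply)
qed

lemma coord_swap_permutes: "r \<ge> 2 \<Longrightarrow> k \<ge> 2 \<Longrightarrow> coord_swap k r permutes prod_dom k r"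
  by (intro two_coord_perm_permutes swap01_permutes)

lemma fixed_points_coord_swap:
  assumes r: "r \<ge> 2"
  shows "{\<gamma> \<in> prod_dom k r. coord_swap k r \<gamma> = \<gamma>} = PiE {0..<r} (\<lambda>i. if i < 2 then {2..<k} else {0..<k})"
proof -
  have "coord_swap k r \<gamma> = \<gamma> \<longleftrightarrow> \<gamma> 0 \<ge> 2 \<and> \<gamma> 1 \<ge> 2" if "\<gamma> \<in> prod_dom k r" for \<gamma>
  proof -
    have "coord_swap k r \<gamma> = \<gamma> \<longleftrightarrow> swap01 (\<gamma> 0) = \<gamma> 0 \<and> swap01 (\<gamma> 1) = \<gamma> 1"
      using that by (auto simp: two_coord_perm_def fun_eq_iff)
    also have "\<dots> \<longleftrightarrow> \<gamma> 0 \<ge> 2 \<and> \<gamma> 1 \<ge> 2" by (auto simp: transpose_eq_iff)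
    finally show ?thesis .
  qed
  moreover have "x \<in> PiE {0..<r} (\<lambda>i. if i < 2 then {2..<k} else {0..<k})
      \<longleftrightarrow> x \<in> prod_dom k r \<and> 2 \<le> x 0 \<and> 2 \<le> x 1" for x
  proof
    assume x: "x \<in> PiE {0..<r} (\<lambda>i. if i < 2 then {2..<k} else {0..<k})"
    have xi: "x i \<in> (if i < 2 then {2..<k} else {0..<k})" if "i < r" for i
      using x that by (auto simp: PiE_iff)
    have "x i \<in> {0..<k}" if "i < r" for i using xi[OF that] by (auto split: if_splits)
    moreover have "x 0 \<in> {2..<k}" "x 1 \<in> {2..<k}" using xi[of 0] xi[of 1] r by auto
    ultimately show "x \<in> prod_dom k r \<and> 2 \<le> x 0 \<and> 2 \<le> x 1"
      using x by (auto simp: prod_dom_def PiE_iff)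
  next
    assume x: "x \<in> prod_dom k r \<and> 2 \<le> x 0 \<and> 2 \<le> x 1"
    have "x i \<in> (if i < 2 then {2..<k} else {0..<k})" if "i \<in> {0..<r}" for i
      using x that less_2_cases[of i] by (auto simp: prod_dom_def PiE_iff)
    then show "x \<in> PiE {0..<r} (\<lambda>i. if i < 2 then {2..<k} else {0..<k})"
      using x by (auto simp: prod_dom_def PiE_iff)
  qed
  ultimately show ?thesis by blast
qed

lemma card_fixed_points_coord_swap:
  assumes r: "r \<ge> 2"
  shows "card {\<gamma> \<in> prod_dom k r. coord_swap k r \<gamma> = \<gamma>} = (k - 2)^2 * k ^ (r - 2)"
proof -
  have "{0..<r} = {0::nat, 1} \<union> {2..<r}" using r by auto
  then have "(\<Prod>i\<in>{0..<r}. card (if i < 2 then {2..<k} else {0..<k}))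
      = (\<Prod>i\<in>{0::nat, 1}. card (if i < 2 then {2..<k} else {0..<k})) * (\<Prod>i\<in>{2..<r}. k)"
    by (simp add: prod.union_disjoint)
  then show ?thesis
    unfolding fixed_points_coord_swap[OF r] by (simp add: card_PiE power2_eq_square)
qed

lemma coord_swap_transversal:
  assumes r: "r \<ge> 2" and k: "k \<ge> 2"
  obtains A where "involution_transversal (prod_dom k r) (coord_swap k r) A"
    and "card A = 2 * (k - 1) * k ^ (r - 2)"
proof -
  let ?\<Omega> = "prod_dom k r" and ?t = "coord_swap k r"
  define M where "M = {x \<in> ?\<Omega>. ?t x \<noteq> x}"
  have tt: "?t (?t x) = x" for x using coord_swap_involution[OF r k] .
  have "?t x \<in> M" if "x \<in> M" for x
  proof -
    have "x \<in> ?\<Omega>" "?t x \<noteq> x" using that by (auto simp: M_def)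
    then show ?thesis using permutes_in_image[OF coord_swap_permutes[OF r k]] tt by (auto simp: M_def)
  qed
  then obtain A where A: "A \<inter> ?t ` A = {}" "A \<union> ?t ` A = M"
    using involution_transversal_exists[of M ?t] tt finite_prod_dom by (auto simp: M_def)
  then interpret involution_transversal ?\<Omega> ?t A
    using finite_prod_dom coord_swap_permutes[OF r k] tt by unfold_locales (auto simp: M_def)
  have "card ?\<Omega> = k^2 * k ^ (r - 2)"
    using r by (metis card_prod_dom le_add_diff_inverse power_add)
  moreover have "card (M \<union> {x \<in> ?\<Omega>. ?t x = x}) = card M + card {x \<in> ?\<Omega>. ?t x = x}"
    using finite_prod_dom by (intro card_Un_disjoint) (auto simp: M_def)
  moreover have "M \<union> {x \<in> ?\<Omega>. ?t x = x} = ?\<Omega>" by (auto simp: M_def)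
  ultimately have "card M + (k - 2)^2 * k ^ (r - 2) = k^2 * k ^ (r - 2)"
    using card_fixed_points_coord_swap[OF r] by simp
  moreover have "k^2 = (k - 2)^2 + 4 * (k - 1)"
  proof -
    have "k = (k - 2) + 2" using k by simp
    then obtain k0 where "k = k0 + 2" by blast
    then show ?thesis by (simp add: power2_eq_square algebra_simps)
  qed
  ultimately have "card M = 2 * (2 * (k - 1) * k ^ (r - 2))" by (simp add: algebra_simps)
  then have "card A = 2 * (k - 1) * k ^ (r - 2)" using card_moved by (simp add: M_def)
  then show ?thesis using that involution_transversal_axioms by blast
qed

lemma coord_swap_in_Alt_grp:
  assumes "r \<ge> 2" and "k \<ge> 2"
  shows "coord_swap k r \<in> carrier (Alt_grp (prod_dom k r))"
proof -
  obtain A where "involution_transversal (prod_dom k r) (coord_swap k r) A"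
    and "card A = 2 * (k - 1) * k ^ (r - 2)"
    using coord_swap_transversal[OF assms] .
  then have "evenperm (coord_swap k r)" using involution_transversal.evenperm_t_iff by fastforce
  then show ?thesis using coord_swap_permutes[OF assms] by (simp add: Alt_grp_def)
qed

lemma coord_swap_ne_id:
  assumes "r \<ge> 2" and "k \<ge> 2"
  shows "coord_swap k r \<noteq> id"
proof -
  define \<gamma> where "\<gamma> = restrict (\<lambda>_. 0::nat) {0..<r}"
  have "\<gamma> \<in> prod_dom k r" using assms by (simp add: \<gamma>_def prod_dom_def)
  then have "coord_swap k r \<gamma> 0 = 1" using assms by (simp add: two_coord_perm_def \<gamma>_def)
  moreover have "\<gamma> 0 = 0" using assms by (simp add: \<gamma>_def)
  ultimately show ?thesis by auto
qed

lemma odd_perm_commuting_coord_swap: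
  assumes r: "r \<ge> 2" and k: "k \<ge> 2"
  obtains w where "w permutes prod_dom k r" "\<not> evenperm w" "w \<circ> coord_swap k r = coord_swap k r \<circ> w"
proof -
  obtain A where A: "involution_transversal (prod_dom k r) (coord_swap k r) A"
    and "card A = 2 * (k - 1) * k ^ (r - 2)"
    using coord_swap_transversal[OF assms] .
  then obtain a where "a \<in> A" using k by (cases "A = {}") auto
  then show ?thesis using that involution_transversal.odd_transposition_commuting[OF A] by blast
qed

lemma card_centralizer_coord_swap_ge:
  assumes G: "sym_or_alt G (prod_dom k r)" and r: "r \<ge> 2" and k: "k \<ge> 2"
  defines "j \<equiv> 2 * (k - 1) * k ^ (r - 2)" and "f \<equiv> (k - 2)^2 * k ^ (r - 2)"
  shows "2 ^ (j - 1) * fact j * fact f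
           \<le> card {x \<in> carrier G. x \<otimes>\<^bsub>G\<^esub> coord_swap k r = coord_swap k r \<otimes>\<^bsub>G\<^esub> x}"
proof -
  interpret sym_or_alt G "prod_dom k r" by fact
  obtain A where A: "involution_transversal (prod_dom k r) (coord_swap k r) A" and "card A = j"
    using coord_swap_transversal[OF r k] unfolding j_def .
  then have "A \<noteq> {}" using k by (auto simp: j_def)
  then have "2 ^ (j - 1) * fact j * fact f
      \<le> card {c. c permutes prod_dom k r \<and> evenperm c \<and> c \<circ> coord_swap k r = coord_swap k r \<circ> c}"
    using involution_transversal.card_even_centralizer_ge[OF A] \<open>card A = j\<close>
      card_fixed_points_coord_swap[OF r] by (simp add: f_def)
  also have "\<dots> \<le> card {x \<in> carrier G. x \<otimes>\<^bsub>G\<^esub> coord_swap k r = coord_swap k r \<otimes>\<^bsub>G\<^esub> x}"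
    using finite_carrier even_in_carrier by (intro card_mono) auto
  finally show ?thesis .
qed

lemma transposition_from_swap01:
  fixes p q k :: nat
  assumes "p < 2" and "2 \<le> q" and "q < k"
  obtains \<alpha> where "\<alpha> permutes {0..<k}" "\<alpha> 0 = p" "\<alpha> 1 = q"
proof -
  define \<alpha> where "\<alpha> = (if p = 0 then Transposition.transpose 1 q else swap01 \<circ> Transposition.transpose 1 q)"
  have "\<alpha> permutes {0..<k}" "\<alpha> 0 = p" "\<alpha> 1 = q"
    using assms by (auto simp: \<alpha>_def intro!: permutes_compose permutes_swap_id)
  then show ?thesis by (rule that)
qed

lemma transpose_low_high_inj:
  fixes p p' q q' :: nat
  assumes "p < 2" "p' < 2" "2 \<le> q" "2 \<le> q'"
    and eq: "Transposition.transpose p q = Transposition.transpose p' q'"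
  shows "p = p' \<and> q = q'"
  using fun_cong[OF eq, of p] fun_cong[OF eq, of p'] assms(1-4) by (auto simp: transpose_def split: if_splits)

lemma card_two_coord_transpositions:
  fixes k r :: nat
  assumes r: "r \<ge> 2"
  defines "P \<equiv> {0::nat, 1} \<times> {2..<k}"
  shows "card ((\<lambda>((p, q), (p', q')). two_coord_perm k r (Transposition.transpose p q) (Transposition.transpose p' q'))
           ` (P \<times> P)) = (2 * (k - 2))^2"
proof -
  define \<phi> where "\<phi> = (\<lambda>((p, q), (p', q')). two_coord_perm k r (Transposition.transpose p q) (Transposition.transpose p' q'))"
  have "inj_on \<phi> (P \<times> P)"
  proof (rule inj_onI)
    fix e1 e2 assume "e1 \<in> P \<times> P" "e2 \<in> P \<times> P" and eq: "\<phi> e1 = \<phi> e2"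
    obtain p1 q1 p1' q1' where e1: "e1 = ((p1, q1), (p1', q1'))" by (metis prod.exhaust)
    obtain p2 q2 p2' q2' where e2: "e2 = ((p2, q2), (p2', q2'))" by (metis prod.exhaust)
    have mem: "p1 < 2" "p2 < 2" "2 \<le> q1" "2 \<le> q2" "p1' < 2" "p2' < 2" "2 \<le> q1'" "2 \<le> q2'"
      and perms: "Transposition.transpose p1 q1 permutes {0..<k}" "Transposition.transpose p2 q2 permutes {0..<k}"
        "Transposition.transpose p1' q1' permutes {0..<k}" "Transposition.transpose p2' q2' permutes {0..<k}"
      using \<open>e1 \<in> P \<times> P\<close> \<open>e2 \<in> P \<times> P\<close> by (auto simp: P_def e1 e2 intro!: permutes_swap_id)
    from two_coord_perm_inj[OF r perms(1,2,3,4)] eq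
    have "Transposition.transpose p1 q1 = Transposition.transpose p2 q2"
      "Transposition.transpose p1' q1' = Transposition.transpose p2' q2'" by (auto simp: \<phi>_def e1 e2)
    then show "e1 = e2" using transpose_low_high_inj mem by (simp add: e1 e2)
  qed
  then show ?thesis
    unfolding \<phi>_def[symmetric]
    by (simp add: card_image card_cartesian_product P_def power2_eq_square algebra_simps)
qed

lemma coord_swap_conjugates_in_wreath:
  assumes r: "r \<ge> 2" and k: "k \<ge> 3" and G: "sym_or_alt G (prod_dom k r)"
  obtains C where "C \<subseteq> wreath_prod_action k r \<inter> carrier G" and "card C = (2 * (k - 2))^2"
    and "\<And>c. c \<in> C \<Longrightarrow> \<exists>x\<in>carrier G. x \<otimes>\<^bsub>G\<^esub> coord_swap k r \<otimes>\<^bsub>G\<^esub> inv\<^bsub>G\<^esub> x = c"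
proof -
  interpret sym_or_alt G "prod_dom k r" by fact
  have k2: "k \<ge> 2" using k by simp
  define P where "P = {0::nat, 1} \<times> {2..<k}"
  define \<phi> where "\<phi> = (\<lambda>((p, q), (p', q')). two_coord_perm k r (Transposition.transpose p q) (Transposition.transpose p' q'))"
  obtain w where w: "w permutes prod_dom k r" "\<not> evenperm w" "w \<circ> coord_swap k r = coord_swap k r \<circ> w"
    using odd_perm_commuting_coord_swap[OF r k2] .
  have conj: "\<exists>x\<in>carrier G. x \<otimes>\<^bsub>G\<^esub> coord_swap k r \<otimes>\<^bsub>G\<^esub> inv\<^bsub>G\<^esub> x = \<phi> ((p, q), (p', q'))"
    if "(p, q) \<in> P" "(p', q') \<in> P" for p q p' q'
  proof -
    have "p < 2" "2 \<le> q" "q < k" using that(1) by (auto simp: P_def)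
    then obtain \<alpha> where \<alpha>: "\<alpha> permutes {0..<k}" "\<alpha> 0 = p" "\<alpha> 1 = q"
      by (rule transposition_from_swap01)
    have "p' < 2" "2 \<le> q'" "q' < k" using that(2) by (auto simp: P_def)
    then obtain \<beta> where \<beta>: "\<beta> permutes {0..<k}" "\<beta> 0 = p'" "\<beta> 1 = q'"
      by (rule transposition_from_swap01)
    have "two_coord_perm k r \<alpha> \<beta> \<circ> coord_swap k r \<circ> Hilbert_Choice.inv (two_coord_perm k r \<alpha> \<beta>)
        = \<phi> ((p, q), (p', q'))"
      using conjugate_coord_swap[OF r k2 \<alpha>(1) \<beta>(1)] \<alpha> \<beta> by (simp add: \<phi>_def)
    then show ?thesis
      using conjugate_in_carrier[OF w two_coord_perm_permutes[OF r \<alpha>(1) \<beta>(1)]] by simp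
  qed
  have mem: "\<phi> e \<in> wreath_prod_action k r \<inter> carrier G" if "e \<in> P \<times> P" for e
  proof -
    obtain p q p' q' where e: "e = ((p, q), (p', q'))" by (metis prod.exhaust)
    then have "(p, q) \<in> P" "(p', q') \<in> P" using that by auto
    then have "Transposition.transpose p q permutes {0..<k}" "Transposition.transpose p' q' permutes {0..<k}"
      by (auto simp: P_def intro!: permutes_swap_id)
    then have "\<phi> e \<in> wreath_prod_action k r"
      using two_coord_perm_in_wreath_prod_action[OF r] by (simp add: \<phi>_def e)
    moreover obtain x where "x \<in> carrier G" "x \<otimes>\<^bsub>G\<^esub> coord_swap k r \<otimes>\<^bsub>G\<^esub> inv\<^bsub>G\<^esub> x = \<phi> e"
      using conj \<open>(p, q) \<in> P\<close> \<open>(p', q') \<in> P\<close> e by blast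
    moreover have "coord_swap k r \<in> carrier G"
      using coord_swap_in_Alt_grp[OF r k2] even_in_carrier by (simp add: Alt_grp_def)
    ultimately show ?thesis by (metis IntI inv_closed m_closed)
  qed
  have "card (\<phi> ` (P \<times> P)) = (2 * (k - 2))^2"
    using card_two_coord_transpositions[OF r] by (simp add: \<phi>_def P_def)
  moreover have "\<exists>x\<in>carrier G. x \<otimes>\<^bsub>G\<^esub> coord_swap k r \<otimes>\<^bsub>G\<^esub> inv\<^bsub>G\<^esub> x = c" if "c \<in> \<phi> ` (P \<times> P)" for c
    using that conj by auto
  ultimately show ?thesis using mem by (intro that[of "\<phi> ` (P \<times> P)"]) auto
qed

lemma coset_fix_coord_swap_bound:
  assumes k: "k \<ge> 5" and r: "r \<ge> 2" and G: "sym_or_alt G (prod_dom k r)"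
    and H: "subgroup (wreath_prod_action k r \<inter> carrier G) G"
  defines "H' \<equiv> wreath_prod_action k r \<inter> carrier G"
  shows "card (rcosets\<^bsub>G\<^esub> H') ^ 4 < coset_fix G H' (coord_swap k r) ^ 9"
proof -
  interpret sym_or_alt G "prod_dom k r" by fact
  define t where "t = coord_swap k r"
  define j where "j = 2 * (k - 1) * k ^ (r - 2)"
  define f where "f = (k - 2)^2 * k ^ (r - 2)"
  define Cen where "Cen = {x \<in> carrier G. x \<otimes>\<^bsub>G\<^esub> t = t \<otimes>\<^bsub>G\<^esub> x}"
  have tG: "t \<in> carrier G"
    using coord_swap_in_Alt_grp[OF r] k even_in_carrier by (simp add: Alt_grp_def t_def)
  obtain C where C: "C \<subseteq> H'" "card C = (2 * (k - 2))^2"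
    and conj: "\<And>c. c \<in> C \<Longrightarrow> \<exists>x\<in>carrier G. x \<otimes>\<^bsub>G\<^esub> t \<otimes>\<^bsub>G\<^esub> inv\<^bsub>G\<^esub> x = c"
    using coord_swap_conjugates_in_wreath[OF r _ G] k unfolding H'_def t_def by auto
  have "card H' \<le> fact k ^ r * fact r"
    using finite_card_wreath_prod_action[of k r] card_mono[of "wreath_prod_action k r" H']
    unfolding H'_def by fastforce
  moreover have "card (rcosets\<^bsub>G\<^esub> H') * card H' \<le> fact (k ^ r)"
    using lagrange[OF H[folded H'_def]] order_le_fact by (simp add: card_prod_dom)
  ultimately have "(card (rcosets\<^bsub>G\<^esub> H') * card H') ^ 4 * card H' ^ 5
      \<le> fact (k ^ r) ^ 4 * (fact k ^ r * fact r) ^ 5"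
    by (intro mult_le_mono power_mono) auto
  also have "\<dots> < ((2 * (k - 2))^2 * (2 ^ (j - 1) * fact j * fact f)) ^ 9"
    using factorial_inequality[OF k r] by (simp add: j_def f_def)
  also have "\<dots> \<le> (card Cen * card C) ^ 9"
    using card_centralizer_coord_swap_ge[OF G r] k C(2)
    by (intro power_mono) (auto simp: Cen_def t_def j_def f_def)
  also have "\<dots> \<le> (coset_fix G H' t * card H') ^ 9"
    using coset_fix_lower_bound[OF finite_carrier H[folded H'_def] tG C(1) conj]
    by (intro power_mono) (simp_all add: Cen_def)
  finally have "card (rcosets\<^bsub>G\<^esub> H') ^ 4 * card H' ^ 9 < coset_fix G H' t ^ 9 * card H' ^ 9"
    by (simp add: power_mult_distrib power_add[symmetric] mult.assoc)
  then show ?thesis by (simp add: t_def)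
qed

theorem proposition2p11:
  fixes k r :: nat and G :: "((nat \<Rightarrow> nat) \<Rightarrow> (nat \<Rightarrow> nat)) monoid"
  assumes "k \<ge> 5" and "r \<ge> 2"
    and "G = Sym_grp (prod_dom k r) \<or> G = Alt_grp (prod_dom k r)"
    and "maximal_subgroup (wreath_prod_action k r \<inter> carrier G) G"
  shows "real (ifix G (wreath_prod_action k r \<inter> carrier G) (carrier (Alt_grp (prod_dom k r))))
           > real (card (rcosets\<^bsub>G\<^esub> (wreath_prod_action k r \<inter> carrier G))) powr (4/9)"
proof -
  define H where "H = wreath_prod_action k r \<inter> carrier G"
  define t where "t = coord_swap k r"
  have G: "sym_or_alt G (prod_dom k r)"
    using assms(3) finite_prod_dom by unfold_locales
  then interpret sym_or_alt G "prod_dom k r" .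
  have "subgroup H G" using assms(4) by (simp add: maximal_subgroup_def H_def)
  then have "card (rcosets\<^bsub>G\<^esub> H) ^ 4 < coset_fix G H t ^ 9"
    using coset_fix_coord_swap_bound[OF assms(1,2) G] by (simp add: H_def t_def)
  then have "real (card (rcosets\<^bsub>G\<^esub> H)) powr (4/9) < real (coset_fix G H t)"
    using powr_less_of_pow_less[of _ 4 _ 9] by simp
  also have "coset_fix G H t \<le> ifix G H (carrier (Alt_grp (prod_dom k r)))"
  proof (rule coset_fix_le_ifix[OF finite_carrier])
    show "t \<in> carrier (Alt_grp (prod_dom k r))" using coord_swap_in_Alt_grp assms(1,2) by (simp add: t_def)
    show "t \<noteq> \<one>\<^bsub>G\<^esub>" using coord_swap_ne_id assms(1,2) by (simp add: t_def)
    show "t \<otimes>\<^bsub>G\<^esub> t = \<one>\<^bsub>G\<^esub>" using coord_swap_involution assms(1,2) by (simp add: t_def fun_eq_iff)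
  qed
  finally show ?thesis by (simp add: H_def)
qed

end
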